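(* Let $F$ be a generic, supertransversal fully-connected ReLU network with input dimension $n_0$, and let $C$ be a $k$-dimensional cell of $\mathcal{C}(F)$. Then the sign sequence $s(C)$ has exactly $n_0-k$ entries equal to zero; that is, $C$ is contained in the intersection of exactly $n_0-k$ bent hyperplanes.
   Context: A ReLU network of architecture $(n_0,\dots,n_m,1)$: affine maps $A_i:\mathbb{R}^{n_{i-1}}\to\mathbb{R}^{n_i}$, $1\le i\le m+1$, $n_{m+1}=1$; $F_i=\mathrm{ReLU}\circ A_i$ ($i\le m$), $G=A_{m+1}$, $F=G\circ F_m\circ\cdots\circ F_1$, $F_{(k)}=F_k\circ\cdots\circ F_1$ ($F_{(0)}=\mathrm{id}$), $F^{(k)}=G\circ F_m\circ\cdots\circ F_k:\mathbb{R}^{n_{k-1}}\to\mathbb{R}$ ($F^{(m+1)}=G$). Node maps $F_{ij}=\pi_j\circ A_i\circ F_{(i-1)}$, $1\le i\le m+1$, $1\le j\le n_i$; $N=n_1+\dots+n_m+1$. A bent hyperplane is a set $F_{ij}^{-1}(0)$. Polyhedra are finite intersections of closed half-spaces; $C^\circ$ is the relative interior. $R^{(i)}$ is the polyhedral complex on $\mathbb{R}^{n_{i-1}}$ induced by the hyperplanes $H_{ij}=\{\pi_jA_i=0\}$, $1\le j\le n_i$ (cells: nonempty intersections of one choice among $\{\pi_jA_i\ge0\},\{\pi_jA_i\le0\},\{\pi_jA_i=0\}$ for each $j$). Canonical polyhedral complex: $\mathcal{C}(F_{(1)})=R^{(1)}$, $\mathcal{C}(F_{(k)})=\{C\cap F_{(k-1)}^{-1}(R)\neq\emptyset: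 C\in\mathcal{C}(F_{(k-1)}),R\in R^{(k)}\}$, $2\le k\le m+1$; $\mathcal{C}(F)$ is the last one. The same construction for $F^{(k)}$ gives $\mathcal{C}(F^{(k)})$ on $\mathbb{R}^{n_{k-1}}$, with $\mathcal{C}(F^{(m+1)})=R^{(m+1)}$. Sign sequence: $s_{ij}(C)=\mathrm{sgn}(F_{ij}(x))$ for $x\in C^\circ$. Generic: for every $i$, any $k$ of the hyperplanes $H_{i1},\dots,H_{in_i}$ intersect in an affine subspace of dimension $n_{i-1}-k$ (empty if $k>n_{i-1}$). A map affine on cells of a polyhedral complex $X$ is transverse on cells of $X$ to a submanifold $Z$ if its restriction to $C^\circ$ is transverse to $Z$ for every cell $C$ of $X$. Supertransversal: for every $1\le i\le m$, $F_i$ is transverse on cells of $R^{(i)}$ to the interior of every cell of $\mathcal{C}(F^{(i+1)})$. *)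

theory Defs
  imports "HOL-Analysis.Analysis" "HOL-Library.Function_Algebras"
begin

text \<open>Points of R^d are represented as functions nat => real vanishing from index d on.
  We make nat => real a real vector space (pointwise operations); its topology is the
  product topology from HOL-Analysis, which on every finite-dimensional affine subspace
  of R^d agrees with the Euclidean topology. Hence the library notions span, dim,
  affine hull and rel_interior have their usual meaning on subsets of R^d.\<close>

instantiation "fun" :: (type, real_vector) real_vector
begin
definition scaleR_fun :: "real \<Rightarrow> ('a \<Rightarrow> 'b) \<Rightarrow> 'a \<Rightarrow> 'b"
  where "scaleR_fun r f = (\<lambda>x. r *\<^sub>R f x)"
instance
  by standard (auto simp: scaleR_fun_def fun_eq_iff scaleR_add_right scaleR_add_left)
end

type_synonym vec = "nat \<Rightarrow> real"

definition Rn :: "nat \<Rightarrow> vec set" where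
  "Rn d = {x. \<forall>k\<ge>d. x k = 0}"

text \<open>Dimension of a (nonempty, convex) set: dimension of the linear space spanned by its differences
  (= dimension of its affine hull).\<close>
definition adim :: "vec set \<Rightarrow> nat" where
  "adim S = dim {x - y | x y. x \<in> S \<and> y \<in> S}"

text \<open>Parameters: widths n :: nat => nat, weights W i j k (row j, column k of A_i) and
  biases b i j, for layers 1 <= i <= m+1; indices j, k start at 0.\<close>

definition affmap :: "(nat \<Rightarrow> nat) \<Rightarrow> (nat \<Rightarrow> nat \<Rightarrow> nat \<Rightarrow> real) \<Rightarrow> (nat \<Rightarrow> nat \<Rightarrow> real)
    \<Rightarrow> nat \<Rightarrow> vec \<Rightarrow> vec" where
  "affmap n W b i x = (\<lambda>j. if j < n i then (\<Sum>k<n (i - 1). W i j k * x k) + b i j else 0)"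

definition layer :: "(nat \<Rightarrow> nat) \<Rightarrow> (nat \<Rightarrow> nat \<Rightarrow> nat \<Rightarrow> real) \<Rightarrow> (nat \<Rightarrow> nat \<Rightarrow> real)
    \<Rightarrow> nat \<Rightarrow> vec \<Rightarrow> vec" where
  "layer n W b i x = (\<lambda>j. max 0 (affmap n W b i x j))"

text \<open>layers n W b k l = F_(k+l-1) o ... o F_k  (identity for l = 0);
  so F_(k) = layers n W b 1 k.\<close>
fun layers :: "(nat \<Rightarrow> nat) \<Rightarrow> (nat \<Rightarrow> nat \<Rightarrow> nat \<Rightarrow> real) \<Rightarrow> (nat \<Rightarrow> nat \<Rightarrow> real)
    \<Rightarrow> nat \<Rightarrow> nat \<Rightarrow> vec \<Rightarrow> vec" where
  "layers n W b k 0 x = x"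
| "layers n W b k (Suc l) x = layer n W b (k + l) (layers n W b k l x)"

definition node :: "(nat \<Rightarrow> nat) \<Rightarrow> (nat \<Rightarrow> nat \<Rightarrow> nat \<Rightarrow> real) \<Rightarrow> (nat \<Rightarrow> nat \<Rightarrow> real)
    \<Rightarrow> nat \<Rightarrow> nat \<Rightarrow> vec \<Rightarrow> real" where
  "node n W b i j x = affmap n W b i (layers n W b 1 (i - 1) x) j"

text \<open>R^(i): cells of the arrangement of hyperplanes H_ij on R^(n (i-1)); sigma j = 1, -1, 0
  selects {pi_j A_i >= 0}, {pi_j A_i <= 0}, {pi_j A_i = 0} respectively.\<close>
definition hcells :: "(nat \<Rightarrow> nat) \<Rightarrow> (nat \<Rightarrow> nat \<Rightarrow> nat \<Rightarrow> real) \<Rightarrow> (nat \<Rightarrow> nat \<Rightarrow> real)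
    \<Rightarrow> nat \<Rightarrow> vec set set" where
  "hcells n W b i = {R. R \<noteq> {} \<and> (\<exists>\<sigma>::nat \<Rightarrow> int. (\<forall>j. \<sigma> j \<in> {-1, 0, 1}) \<and>
      R = {x \<in> Rn (n (i - 1)). \<forall>j < n i.
             (\<sigma> j = 1 \<longrightarrow> 0 \<le> affmap n W b i x j) \<and>
             (\<sigma> j = -1 \<longrightarrow> affmap n W b i x j \<le> 0) \<and>
             (\<sigma> j = 0 \<longrightarrow> affmap n W b i x j = 0)})}"

text \<open>canon n W b k l: canonical polyhedral complex (on R^(n (k-1))) of the network made of the
  l consecutive layers k, ..., k+l-1. Thus C(F_(k)) = canon n W b 1 k, C(F) = canon n W b 1 (m+1),
  and C(F^(k)) = canon n W b k (m+2-k).\<close>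
fun canon :: "(nat \<Rightarrow> nat) \<Rightarrow> (nat \<Rightarrow> nat \<Rightarrow> nat \<Rightarrow> real) \<Rightarrow> (nat \<Rightarrow> nat \<Rightarrow> real)
    \<Rightarrow> nat \<Rightarrow> nat \<Rightarrow> vec set set" where
  "canon n W b k 0 = {Rn (n (k - 1))}"
| "canon n W b k (Suc l) =
     {C \<inter> (layers n W b k l -` R) | C R.
        C \<in> canon n W b k l \<and> R \<in> hcells n W b (k + l) \<and> C \<inter> (layers n W b k l -` R) \<noteq> {}}"

definition generic :: "(nat \<Rightarrow> nat) \<Rightarrow> (nat \<Rightarrow> nat \<Rightarrow> nat \<Rightarrow> real) \<Rightarrow> (nat \<Rightarrow> nat \<Rightarrow> real)
    \<Rightarrow> nat \<Rightarrow> bool" where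
  "generic n W b m \<longleftrightarrow> (\<forall>i \<in> {1..Suc m}. \<forall>S \<subseteq> {..<n i}.
     (let X = {x \<in> Rn (n (i - 1)). \<forall>j \<in> S. affmap n W b i x j = 0} in
       (card S \<le> n (i - 1) \<longrightarrow> X \<noteq> {} \<and> adim X = n (i - 1) - card S) \<and>
       (n (i - 1) < card S \<longrightarrow> X = {})))"

text \<open>Transversality of a map g that is affine on the cell C to the interior of the cell D in R^d:
  at every x in the relative interior of C with g x in the relative interior of D, the image
  of the differential of g restricted to C (i.e. span of g p - g q, p q in C) together with the
  tangent space of D (span of u - v, u v in D) spans R^d.\<close>
definition transverse_on_cell :: "(vec \<Rightarrow> vec) \<Rightarrow> vec set \<Rightarrow> vec set \<Rightarrow> nat \<Rightarrow> bool" where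
  "transverse_on_cell g C D d \<longleftrightarrow>
     (\<forall>x \<in> rel_interior C. g x \<in> rel_interior D \<longrightarrow>
        span ({g p - g q | p q. p \<in> C \<and> q \<in> C} \<union> {u - v | u v. u \<in> D \<and> v \<in> D}) = Rn d)"

definition supertransversal :: "(nat \<Rightarrow> nat) \<Rightarrow> (nat \<Rightarrow> nat \<Rightarrow> nat \<Rightarrow> real) \<Rightarrow> (nat \<Rightarrow> nat \<Rightarrow> real)
    \<Rightarrow> nat \<Rightarrow> bool" where
  "supertransversal n W b m \<longleftrightarrow> (\<forall>i \<in> {1..m}. \<forall>C \<in> hcells n W b i.
     \<forall>D \<in> canon n W b (Suc i) (Suc m - i). transverse_on_cell (layer n W b i) C D (n i))"

definition sign_seq :: "(nat \<Rightarrow> nat) \<Rightarrow> (nat \<Rightarrow> nat \<Rightarrow> nat \<Rightarrow> real) \<Rightarrow> (nat \<Rightarrow> nat \<Rightarrow> real)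
    \<Rightarrow> vec set \<Rightarrow> nat \<Rightarrow> nat \<Rightarrow> real" where
  "sign_seq n W b C i j = sgn (node n W b i j (SOME x. x \<in> rel_interior C))"

end

theory Submission
  imports Defs
begin

text \<open>Freeze the activation pattern of all nodes at a point \<open>y\<close>. On the set \<open>P(y)\<close> of points
  whose nodes have weakly the same signs as at \<open>y\<close> the network agrees with the affine network of
  this pattern, and \<open>P(y)\<close> is a neighbourhood of \<open>y\<close> in the affine space on which the nodes
  vanishing at \<open>y\<close> stay zero. Hence \<open>dim P(y)\<close> is \<open>n\<^sub>0\<close> minus the rank of the gradients of these
  nodes. Genericity and supertransversality make the gradients linearly independent, by backward
  induction over the layers: in a vanishing linear combination the later-layer part is the
  pull-back \<open>J\<^sup>T u\<close> of a covector \<open>u\<close> that annihilates the tangent space of the later cell,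
  while \<open>J\<^sup>T u\<close>, being minus a combination of first-layer rows, annihilates the first-layer cell;
  transversality forces \<open>u = 0\<close> and genericity kills the first-layer coefficients. Finally every
  cell \<open>C\<close> of \<open>C(F)\<close> equals \<open>P(x)\<close> for \<open>x\<close> in its relative interior, so \<open>dim C = n\<^sub>0 - #zeros\<close>.\<close>

section \<open>Coordinates and orthogonality in R^d\<close>

lemma scaleR_vec_apply [simp]: "(r *\<^sub>R (f::vec)) x = r * f x"
  by (simp add: scaleR_fun_def)

lemma sum_vec_apply [simp]: "(sum (f :: 'a \<Rightarrow> vec) A) x = (\<Sum>a\<in>A. f a x)"
  by (induction A rule: infinite_finite_induct) auto

lemma subspace_Rn: "subspace (Rn d)"
  unfolding subspace_def Rn_def by auto

lemma Rn_add [intro]: "x \<in> Rn d \<Longrightarrow> y \<in> Rn d \<Longrightarrow> x + y \<in> Rn d"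
  and Rn_diff [intro]: "x \<in> Rn d \<Longrightarrow> y \<in> Rn d \<Longrightarrow> x - y \<in> Rn d"
  and Rn_scaleR [intro]: "x \<in> Rn d \<Longrightarrow> c *\<^sub>R x \<in> Rn d"
  and Rn_zero [intro]: "0 \<in> Rn d"
  by (auto simp: Rn_def)

lemma Rn_sum [intro]: "(\<And>a. a \<in> A \<Longrightarrow> f a \<in> Rn d) \<Longrightarrow> sum f A \<in> Rn d"
  by (auto simp: Rn_def)

lemma span_subset_Rn: "S \<subseteq> Rn d \<Longrightarrow> span S \<subseteq> Rn d"
  using subspace_Rn span_minimal by blast

definition dotp :: "nat \<Rightarrow> vec \<Rightarrow> vec \<Rightarrow> real" where
  "dotp d u v = (\<Sum>t<d. u t * v t)"

lemma dotp_add_right: "dotp d g (v + w) = dotp d g v + dotp d g w"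
  and dotp_diff_right: "dotp d g (v - w) = dotp d g v - dotp d g w"
  and dotp_scaleR_right: "dotp d g (c *\<^sub>R v) = c * dotp d g v"
  and dotp_add_left: "dotp d (v + w) g = dotp d v g + dotp d w g"
  and dotp_scaleR_left: "dotp d (c *\<^sub>R v) g = c * dotp d v g"
  and dotp_zero_left: "dotp d 0 g = 0"
  and dotp_zero_right: "dotp d g 0 = 0"
  by (auto simp: dotp_def algebra_simps sum.distrib sum_subtractf sum_distrib_left)

lemma dotp_sum_left: "dotp d (sum f A) g = (\<Sum>a\<in>A. dotp d (f a) g)"
  unfolding dotp_def by (simp add: sum_distrib_right sum.swap[of _ A])

lemma dotp_commute: "dotp d u v = dotp d v u"
  by (simp add: dotp_def mult.commute)

lemma dotp_self_eq_0: assumes "v \<in> Rn d" "dotp d v v = 0" shows "v = 0"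
proof
  fix t
  have "\<forall>t\<in>{..<d}. v t * v t = 0"
    using assms(2) unfolding dotp_def by (subst sum_nonneg_eq_0_iff[symmetric]) auto
  then show "v t = 0 t" using assms(1) by (cases "t < d") (auto simp: Rn_def)
qed

lemma dotp_abs_le:
  assumes "\<forall>t<d. \<bar>v t\<bar> \<le> \<delta>"
  shows "\<bar>dotp d g v\<bar> \<le> \<delta> * (\<Sum>t<d. \<bar>g t\<bar>)"
proof -
  have "\<bar>dotp d g v\<bar> \<le> (\<Sum>t<d. \<bar>g t * v t\<bar>)" unfolding dotp_def by (rule sum_abs)
  also have "\<dots> \<le> (\<Sum>t<d. \<bar>g t\<bar> * \<delta>)"
    using assms by (intro sum_mono) (auto simp: abs_mult mult_left_mono)
  finally show ?thesis by (simp add: sum_distrib_left mult.commute)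
qed

lemma ex_pos_mult_abs_less:
  fixes c a :: "'a \<Rightarrow> real"
  assumes "finite I"
  shows "\<exists>\<epsilon>>0. \<forall>i\<in>I. c i \<noteq> 0 \<longrightarrow> \<epsilon> * \<bar>a i\<bar> < \<bar>c i\<bar>"
proof -
  define S where "S = insert 1 ((\<lambda>i. \<bar>c i\<bar> / (\<bar>a i\<bar> + 1)) ` {i\<in>I. c i \<noteq> 0})"
  have S: "finite S" "S \<noteq> {}" "\<forall>s\<in>S. 0 < s" using assms by (auto simp: S_def)
  have "\<bar>c i\<bar> / (\<bar>a i\<bar> + 1) * \<bar>a i\<bar> < \<bar>c i\<bar>" if "c i \<noteq> 0" for i
  proof -
    have "\<bar>c i\<bar> * \<bar>a i\<bar> < \<bar>c i\<bar> * (\<bar>a i\<bar> + 1)" using that by simp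
    then show ?thesis by (simp add: pos_divide_less_eq)
  qed
  moreover have "Min S \<le> \<bar>c i\<bar> / (\<bar>a i\<bar> + 1)" if "i \<in> I" "c i \<noteq> 0" for i
    using S that by (auto simp: S_def)
  ultimately have "\<forall>i\<in>I. c i \<noteq> 0 \<longrightarrow> Min S * \<bar>a i\<bar> < \<bar>c i\<bar>"
    by (meson abs_ge_zero mult_right_mono order_le_less_trans)
  moreover have "Min S > 0" using S by simp
  ultimately show ?thesis by blast
qed

lemma add_mult_ne_0_if_small:
  fixes a d t t0 :: real
  assumes "a \<noteq> 0" "t0 * \<bar>d\<bar> < \<bar>a\<bar>" "0 \<le> t" "t \<le> t0"
  shows "a + t * d \<noteq> 0"
proof -
  have "\<bar>t * d\<bar> \<le> t0 * \<bar>d\<bar>" using assms(3,4) by (simp add: abs_mult mult_right_mono)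
  then show ?thesis using assms(2) by auto
qed

lemma dotp_span_eq_0:
  assumes "\<forall>g\<in>G. dotp d g v = 0" "w \<in> span G"
  shows "dotp d w v = 0"
proof -
  have "subspace {w. dotp d w v = 0}"
    unfolding subspace_def by (auto simp: dotp_add_left dotp_scaleR_left dotp_zero_left)
  then show ?thesis using assms span_minimal[of G "{w. dotp d w v = 0}"] by auto
qed

lemma orthogonal_projection_exists:
  assumes "finite G" "G \<subseteq> Rn d" "w \<in> Rn d"
  shows "\<exists>u\<in>span G. \<forall>g\<in>G. dotp d g (w - u) = 0"
  using assms
proof (induction G arbitrary: w rule: finite_induct)
  case empty
  then show ?case by (auto intro: span_zero)
next
  case (insert g G)
  obtain uw where uw: "uw \<in> span G" "\<forall>h\<in>G. dotp d h (w - uw) = 0"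
    using insert.IH[of w] insert.prems by blast
  obtain ug where ug: "ug \<in> span G" "\<forall>h\<in>G. dotp d h (g - ug) = 0"
    using insert.IH[of g] insert.prems by blast
  \<comment> \<open>Gram-Schmidt: correct uw along the component h of g orthogonal to G\<close>
  define h where "h = g - ug"
  have orth_h: "dotp d x h = 0" and orth_w: "dotp d x (w - uw) = 0" if "x \<in> span G" for x
    using dotp_span_eq_0[OF ug(2)[folded h_def] that] dotp_span_eq_0[OF uw(2) that] by auto
  have span_G: "span G \<subseteq> span (insert g G)" by (simp add: span_mono subset_insertI)
  define c where "c = dotp d h (w - uw) / dotp d h h"
  define u where "u = uw + c *\<^sub>R h"
  have "u \<in> span (insert g G)"
    unfolding u_def h_def using uw(1) ug(1) span_G
    by (intro span_add span_scale span_diff) (auto intro: span_base)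
  moreover have "dotp d x (w - u) = 0" if x: "x \<in> insert g G" for x
  proof (cases "x = g")
    case True
    have "h \<in> Rn d" unfolding h_def using insert.prems ug(1) span_subset_Rn[of G d] by auto
    then have "dotp d h h = 0 \<Longrightarrow> h = 0" by (rule dotp_self_eq_0)
    then have "dotp d h (w - uw) - c * dotp d h h = 0"
      by (cases "dotp d h h = 0") (auto simp: c_def dotp_zero_left)
    moreover have "dotp d g (w - u) = (dotp d h (w - uw) - c * dotp d h h)
        + (dotp d ug (w - uw) - c * dotp d ug h)"
    proof -
      have "g = h + ug" "w - u = (w - uw) - c *\<^sub>R h" by (simp_all add: h_def u_def)
      then show ?thesis
        by (simp only: dotp_add_left dotp_diff_right dotp_scaleR_right) (simp add: algebra_simps)
    qed
    ultimately show ?thesis using True orth_h[OF ug(1)] orth_w[OF ug(1)] by simp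
  next
    case False
    then have "x \<in> span G" using x by (auto intro: span_base)
    moreover have "dotp d x (w - u) = dotp d x (w - uw) - c * dotp d x h"
      by (simp add: u_def dotp_diff_right dotp_add_right dotp_scaleR_right)
    ultimately show ?thesis using orth_h orth_w by simp
  qed
  ultimately show ?case by blast
qed

definition unit_vec :: "nat \<Rightarrow> vec" where
  "unit_vec k = (\<lambda>t. if t = k then 1 else 0)"

lemma sum_unit_vec_apply:
  "finite K \<Longrightarrow> (\<Sum>k\<in>K. c k * unit_vec k t) = (if t \<in> K then c t else 0)"
  by (simp add: unit_vec_def if_distrib[of "(*) _"] eq_commute[of t] cong: if_cong)

lemma Rn_eq_sum_unit_vec: "w \<in> Rn d \<Longrightarrow> w = (\<Sum>k<d. w k *\<^sub>R unit_vec k)"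
  by (auto simp: fun_eq_iff sum_unit_vec_apply Rn_def)

lemma Rn_subset_span_unit_vec: "Rn d \<subseteq> span (unit_vec ` {..<d})"
proof
  fix w assume "w \<in> Rn d"
  then have "w = (\<Sum>k<d. w k *\<^sub>R unit_vec k)" by (rule Rn_eq_sum_unit_vec)
  also have "\<dots> \<in> span (unit_vec ` {..<d})"
    by (intro span_sum span_scale span_base) auto
  finally show "w \<in> span (unit_vec ` {..<d})" .
qed

lemma independent_Un_if_span_inter_0:
  fixes A B :: "'a::real_vector set"
  assumes "finite A" "finite B" "independent A" "independent B"
    and "\<And>x. x \<in> span A \<Longrightarrow> x \<in> span B \<Longrightarrow> x = 0"
  shows "A \<inter> B = {}" "independent (A \<union> B)"
proof -
  show disj: "A \<inter> B = {}"
    using assms(3,5) dependent_zero span_base by blast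
  show "independent (A \<union> B)"
  proof (rule independent_if_scalars_zero)
    fix f x assume sum: "(\<Sum>x\<in>A \<union> B. f x *\<^sub>R x) = 0" and x: "x \<in> A \<union> B"
    define a where "a = (\<Sum>x\<in>A. f x *\<^sub>R x)"
    define c where "c = (\<Sum>x\<in>B. f x *\<^sub>R x)"
    have "a = - c" using sum unfolding a_def c_def
      by (simp add: sum.union_disjoint[OF assms(1,2) disj] eq_neg_iff_add_eq_0)
    moreover have "a \<in> span A" "c \<in> span B"
      unfolding a_def c_def by (auto intro: span_sum span_scale span_base)
    ultimately have "a = 0" "c = 0" using assms(5)[of a] span_neg[of c B] by simp_all
    then show "f x = 0"
      using x assms(3,4) dependent_finite[OF assms(1)] dependent_finite[OF assms(2)]
      unfolding a_def c_def by blast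
  qed (use assms in simp)
qed

lemma dim_Rn: "dim (Rn d) = d"
proof -
  have inj: "inj_on unit_vec {..<d}"
    by (auto simp: inj_on_def unit_vec_def fun_eq_iff split: if_splits)
  have "independent (unit_vec ` {..<d})"
  proof (rule independent_if_scalars_zero)
    fix f x assume sum: "(\<Sum>x\<in>unit_vec ` {..<d}. f x *\<^sub>R x) = 0"
      and x: "x \<in> unit_vec ` {..<d}"
    then obtain k where k: "k < d" "x = unit_vec k" by auto
    have "(\<Sum>j<d. f (unit_vec j) *\<^sub>R unit_vec j) k = 0"
      using sum by (simp add: sum.reindex[OF inj])
    then show "f x = 0" using k by (simp add: sum_unit_vec_apply)
  qed simp
  moreover have "unit_vec ` {..<d} \<subseteq> Rn d" by (auto simp: Rn_def unit_vec_def)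
  ultimately show ?thesis
    using basis_card_eq_dim[OF _ Rn_subset_span_unit_vec] card_image[OF inj] by simp
qed

lemma finite_basis_of_subspace_Rn:
  assumes "subspace L" "L \<subseteq> Rn d"
  obtains B where "finite B" "B \<subseteq> L" "independent B" "span B = L" "card B = dim L"
proof -
  obtain B where B: "B \<subseteq> L" "independent B" "L \<subseteq> span B" "card B = dim L"
    using basis_exists by blast
  have "finite B"
    using B assms Rn_subset_span_unit_vec independent_span_bound[of "unit_vec ` {..<d}" B]
    by blast
  moreover have "span B = L" using span_subspace B assms by blast
  ultimately show ?thesis using that B by blast
qed

lemma dim_orthogonal_complement_Rn:
  assumes fin: "finite G" and G: "G \<subseteq> Rn d"
  shows "dim {v \<in> Rn d. \<forall>g\<in>G. dotp d g v = 0} + dim G = d"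
proof -
  define L where "L = {v \<in> Rn d. \<forall>g\<in>G. dotp d g v = 0}"
  have "subspace L" "L \<subseteq> Rn d"
    unfolding L_def subspace_def by (auto simp: dotp_add_right dotp_scaleR_right dotp_zero_right)
  then obtain BL where BL: "finite BL" "BL \<subseteq> L" "independent BL" "span BL = L" "card BL = dim L"
    by (rule finite_basis_of_subspace_Rn)
  have span_G: "span G \<subseteq> Rn d" using span_subset_Rn[OF G] .
  obtain BG where BG: "finite BG" "BG \<subseteq> span G" "independent BG" "span BG = span G"
    "card BG = dim (span G)"
    by (rule finite_basis_of_subspace_Rn[OF subspace_span span_G])
  define B where "B = BL \<union> BG"
  have "a = 0" if "a \<in> span BL" "a \<in> span BG" for a
  proof -
    have "dotp d a a = 0" using that dotp_span_eq_0[of G d a a] BL(4) BG(4) by (simp add: L_def)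
    then show ?thesis using that(1) BL(4) dotp_self_eq_0[of a d] by (simp add: L_def)
  qed
  then have disj: "BL \<inter> BG = {}" and "independent B"
    using independent_Un_if_span_inter_0[OF BL(1) BG(1) BL(3) BG(3)] unfolding B_def by auto
  moreover have "B \<subseteq> Rn d" unfolding B_def using BL(2) BG(2) span_G by (auto simp: L_def)
  moreover have "Rn d \<subseteq> span B"
  proof
    fix w assume w: "w \<in> Rn d"
    obtain u where u: "u \<in> span G" "\<forall>g\<in>G. dotp d g (w - u) = 0"
      using orthogonal_projection_exists[OF fin G w] by blast
    have "w - u \<in> L" using u w span_G unfolding L_def by auto
    then have "w - u \<in> span B" using BL(4) span_mono[of BL B] unfolding B_def by auto
    moreover have "u \<in> span B" using u(1) BG(4) span_mono[of BG B] unfolding B_def by auto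
    ultimately have "(w - u) + u \<in> span B" by (rule span_add)
    then show "w \<in> span B" by simp
  qed
  ultimately have "card B = d" using basis_card_eq_dim[of B "Rn d"] dim_Rn by simp
  then show ?thesis
    unfolding B_def L_def[symmetric] using card_Un_disjoint[OF BL(1) BG(1) disj] BL(5) BG(5)
    by simp
qed

definition independent_family :: "'a set \<Rightarrow> ('a \<Rightarrow> vec) \<Rightarrow> bool" where
  "independent_family Z g \<longleftrightarrow> (\<forall>c. (\<Sum>z\<in>Z. c z *\<^sub>R g z) = 0 \<longrightarrow> (\<forall>z\<in>Z. c z = 0))"

lemma independent_family_inj_on:
  assumes "finite Z" "independent_family Z g"
  shows "inj_on g Z"
proof (rule inj_onI, rule ccontr)
  fix x y assume xy: "x \<in> Z" "y \<in> Z" "g x = g y" "x \<noteq> y"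
  define c where "c z = (if z = x then 1 else if z = y then -1 else (0::real))" for z
  have "(\<Sum>z\<in>Z. c z *\<^sub>R g z) = (\<Sum>z\<in>{x,y}. c z *\<^sub>R g z)"
    by (rule sum.mono_neutral_right) (auto simp: assms xy c_def)
  also have "\<dots> = 0" using xy by (simp add: c_def)
  finally have "c x = 0" using assms(2) xy unfolding independent_family_def by blast
  then show False by (simp add: c_def)
qed

lemma dim_image_independent_family:
  assumes "finite Z" "independent_family Z g"
  shows "dim (g ` Z) = card Z"
proof -
  have inj: "inj_on g Z" using independent_family_inj_on[OF assms] .
  have "independent (g ` Z)"
  proof (rule independent_if_scalars_zero)
    fix f x assume "(\<Sum>x\<in>g ` Z. f x *\<^sub>R x) = 0" and "x \<in> g ` Z"
    then show "f x = 0"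
      using assms(2) by (auto simp: sum.reindex[OF inj] independent_family_def)
  qed (use assms in simp)
  then show ?thesis using dim_eq_card_independent card_image[OF inj] by metis
qed

lemma independent_family_if_dim_eq_card:
  assumes "finite Z" "dim (g ` Z) = card Z"
  shows "independent_family Z g"
proof -
  obtain B where B: "B \<subseteq> g ` Z" "independent B" "g ` Z \<subseteq> span B" "card B = dim (g ` Z)"
    using basis_exists by blast
  have "card B \<le> card (g ` Z)" "card (g ` Z) \<le> card Z"
    using B(1) assms(1) by (simp_all add: card_mono card_image_le)
  then have "card (g ` Z) = card Z" "B = g ` Z"
    using B(1,4) assms card_subset_eq[of "g ` Z" B] by auto
  then have inj: "inj_on g Z" and indep: "independent (g ` Z)"
    using eq_card_imp_inj_on[OF assms(1)] B(2) by auto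
  have coeffs_0: "\<forall>x\<in>g ` Z. u x = 0" if "(\<Sum>x\<in>g ` Z. u x *\<^sub>R x) = 0" for u
    using that indep dependent_finite[OF finite_imageI[OF assms(1)]] by blast
  show ?thesis unfolding independent_family_def
  proof (intro allI impI)
    fix c assume "(\<Sum>z\<in>Z. c z *\<^sub>R g z) = 0"
    then have "(\<Sum>x\<in>g ` Z. c (the_inv_into Z g x) *\<^sub>R x) = 0"
      by (simp add: sum.reindex[OF inj] the_inv_into_f_f[OF inj])
    then have "\<forall>x\<in>g ` Z. c (the_inv_into Z g x) = 0" by (rule coeffs_0)
    then show "\<forall>z\<in>Z. c z = 0" using the_inv_into_f_f[OF inj] by force
  qed
qed

lemma dim_orthogonal_complement_family:
  assumes "finite Z" "independent_family Z g" "\<forall>z\<in>Z. g z \<in> Rn d"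
  shows "dim {v \<in> Rn d. \<forall>z\<in>Z. dotp d (g z) v = 0} + card Z = d"
  using dim_orthogonal_complement_Rn[of "g ` Z" d] dim_image_independent_family[OF assms(1,2)]
    assms by auto

section \<open>Networks with a frozen activation pattern\<close>

definition relu_consistent :: "bool \<Rightarrow> real \<Rightarrow> bool" where
  "relu_consistent act a \<longleftrightarrow> (if act then 0 \<le> a else a \<le> 0)"

lemma max_0_if_relu_consistent: "relu_consistent act a \<Longrightarrow> max 0 a = (if act then a else 0)"
  by (simp add: relu_consistent_def)

locale relu_net =
  fixes n :: "nat \<Rightarrow> nat" and W :: "nat \<Rightarrow> nat \<Rightarrow> nat \<Rightarrow> real" and b :: "nat \<Rightarrow> nat \<Rightarrow> real"
begin

definition node_from :: "nat \<Rightarrow> nat \<Rightarrow> nat \<Rightarrow> vec \<Rightarrow> real" where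
  "node_from k i j y = affmap n W b i (layers n W b k (i - k) y) j"

text \<open>An activation pattern \<open>\<mu>\<close> declares node \<open>(i, j)\<close> active iff \<open>\<mu> i j\<close>; freezing it
  replaces each ReLU by the identity or by zero, so the masked network is affine.\<close>

definition masked_layer :: "(nat \<Rightarrow> nat \<Rightarrow> bool) \<Rightarrow> nat \<Rightarrow> vec \<Rightarrow> vec" where
  "masked_layer \<mu> i x = (\<lambda>j. if \<mu> i j then affmap n W b i x j else 0)"

fun masked_layers :: "(nat \<Rightarrow> nat \<Rightarrow> bool) \<Rightarrow> nat \<Rightarrow> nat \<Rightarrow> vec \<Rightarrow> vec" where
  "masked_layers \<mu> k 0 x = x"
| "masked_layers \<mu> k (Suc l) x = masked_layer \<mu> (k + l) (masked_layers \<mu> k l x)"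

definition masked_node :: "(nat \<Rightarrow> nat \<Rightarrow> bool) \<Rightarrow> nat \<Rightarrow> nat \<Rightarrow> nat \<Rightarrow> vec \<Rightarrow> real" where
  "masked_node \<mu> k i j y = affmap n W b i (masked_layers \<mu> k (i - k) y) j"

definition weight_row :: "nat \<Rightarrow> nat \<Rightarrow> vec" where
  "weight_row i j = (\<lambda>t. if t < n (i - 1) then W i j t else 0)"

definition masked_adjoint :: "(nat \<Rightarrow> nat \<Rightarrow> bool) \<Rightarrow> nat \<Rightarrow> vec \<Rightarrow> vec" where
  "masked_adjoint \<mu> k u =
     (\<lambda>t. if t < n (k - 1) then (\<Sum>s<n k. if \<mu> k s then u s * W k s t else 0) else 0)"

text \<open>\<open>masked_grad \<mu> k l j\<close> is the gradient of the masked node \<open>(k + l, j)\<close> with respect to the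
  input of layer \<open>k\<close>.\<close>

fun masked_grad :: "(nat \<Rightarrow> nat \<Rightarrow> bool) \<Rightarrow> nat \<Rightarrow> nat \<Rightarrow> nat \<Rightarrow> vec" where
  "masked_grad \<mu> k 0 j = weight_row k j"
| "masked_grad \<mu> k (Suc l) j = masked_adjoint \<mu> k (masked_grad \<mu> (Suc k) l j)"

lemma affmap_eq_0_beyond: "\<not> j < n i \<Longrightarrow> affmap n W b i x j = 0"
  by (simp add: affmap_def)

lemma layer_Rn: "layer n W b i x \<in> Rn (n i)"
  by (simp add: layer_def Rn_def affmap_def)

lemma layers_Rn: "x \<in> Rn (n (k - 1)) \<Longrightarrow> layers n W b k l x \<in> Rn (n (k + l - 1))"
  by (cases l) (auto simp: layer_Rn)

lemma layers_Suc_left: "layers n W b k (Suc l) x = layers n W b (Suc k) l (layer n W b k x)"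
  by (induction l) auto

lemma masked_layers_Suc_left:
  "masked_layers \<mu> k (Suc l) x = masked_layers \<mu> (Suc k) l (masked_layer \<mu> k x)"
  by (induction l) auto

lemma node_from_Suc: "k < i \<Longrightarrow> node_from k i j y = node_from (Suc k) i j (layer n W b k y)"
  unfolding node_from_def by (metis Suc_diff_Suc layers_Suc_left)

lemma node_from_self: "node_from k k j y = affmap n W b k y j"
  by (simp add: node_from_def)

lemma node_eq_node_from: "node n W b i j x = node_from 1 i j x"
  by (simp add: node_def node_from_def)

lemma affmap_diff: "j < n i \<Longrightarrow>
  affmap n W b i x j - affmap n W b i y j = dotp (n (i - 1)) (weight_row i j) (x - y)"
  by (simp add: affmap_def dotp_def weight_row_def algebra_simps sum_subtractf)

lemma affmap_add: "j < n i \<Longrightarrow>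
  affmap n W b i (x + v) j = affmap n W b i x j + dotp (n (i - 1)) (weight_row i j) v"
  using affmap_diff[of j i "x + v" x] by simp

lemma dotp_masked_layer_diff:
  "dotp (n k) u (masked_layer \<mu> k p - masked_layer \<mu> k q)
     = dotp (n (k - 1)) (masked_adjoint \<mu> k u) (p - q)"
proof -
  have "dotp (n k) u (masked_layer \<mu> k p - masked_layer \<mu> k q)
      = (\<Sum>s<n k. \<Sum>t<n (k - 1). if \<mu> k s then u s * W k s t * (p t - q t) else 0)"
    unfolding dotp_def masked_layer_def
    by (intro sum.cong refl) (auto simp: affmap_def sum_distrib_left algebra_simps sum_subtractf)
  also have "\<dots> = (\<Sum>t<n (k - 1). \<Sum>s<n k. if \<mu> k s then u s * W k s t * (p t - q t) else 0)"
    by (rule sum.swap)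
  also have "\<dots> = dotp (n (k - 1)) (masked_adjoint \<mu> k u) (p - q)"
    unfolding dotp_def masked_adjoint_def
    by (intro sum.cong refl) (auto simp: sum_distrib_right intro!: sum.cong)
  finally show ?thesis .
qed

lemma masked_node_diff_offset:
  "j < n (k + l) \<Longrightarrow> masked_node \<mu> k (k + l) j z - masked_node \<mu> k (k + l) j y
     = dotp (n (k - 1)) (masked_grad \<mu> k l j) (z - y)"
proof (induction l arbitrary: k y z)
  case 0
  then show ?case using affmap_diff[of j k z y] by (simp add: masked_node_def fun_diff_def)
next
  case (Suc l)
  have peel: "masked_node \<mu> k (k + Suc l) j x
      = masked_node \<mu> (Suc k) (Suc k + l) j (masked_layer \<mu> k x)" for x
  proof -
    have "k + Suc l - k = Suc l" "Suc k + l - Suc k = l" "Suc k + l = k + Suc l" by simp_all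
    then show ?thesis unfolding masked_node_def by (simp only: masked_layers_Suc_left)
  qed
  have "j < n (Suc k + l)" using Suc.prems by simp
  from Suc.IH[OF this, of "masked_layer \<mu> k z" "masked_layer \<mu> k y"]
  have "masked_node \<mu> k (k + Suc l) j z - masked_node \<mu> k (k + Suc l) j y
      = dotp (n k) (masked_grad \<mu> (Suc k) l j) (masked_layer \<mu> k z - masked_layer \<mu> k y)"
    unfolding peel by (simp only: diff_Suc_1)
  then show ?case by (simp only: dotp_masked_layer_diff masked_grad.simps)
qed

lemma masked_node_diff: "k \<le> i \<Longrightarrow> j < n i \<Longrightarrow>
  masked_node \<mu> k i j z - masked_node \<mu> k i j y = dotp (n (k - 1)) (masked_grad \<mu> k (i - k) j) (z - y)"
  using masked_node_diff_offset[of j k "i - k" \<mu> z y] by simp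

lemma weight_row_Rn: "weight_row i j \<in> Rn (n (i - 1))"
  by (simp add: weight_row_def Rn_def)

lemma masked_adjoint_Rn: "masked_adjoint \<mu> k u \<in> Rn (n (k - 1))"
  by (simp add: masked_adjoint_def Rn_def)

lemma masked_grad_Rn: "masked_grad \<mu> k l j \<in> Rn (n (k - 1))"
  by (cases l) (simp_all only: masked_grad.simps weight_row_Rn masked_adjoint_Rn)

lemma masked_grad_cong: "(\<forall>i\<ge>k. \<mu> i = \<mu>' i) \<Longrightarrow> masked_grad \<mu> k l j = masked_grad \<mu>' k l j"
proof (induction l arbitrary: k)
  case (Suc l)
  then have "masked_grad \<mu> (Suc k) l j = masked_grad \<mu>' (Suc k) l j" "\<mu> k = \<mu>' k" by auto
  moreover have "masked_adjoint \<mu> k = masked_adjoint \<mu>' k"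
    unfolding masked_adjoint_def using \<open>\<mu> k = \<mu>' k\<close> by (simp add: fun_eq_iff)
  ultimately show ?case by simp
qed simp

lemma linear_masked_adjoint: "linear (masked_adjoint \<mu> k)"
proof (rule linearI)
  fix u v :: vec
  show "masked_adjoint \<mu> k (u + v) = masked_adjoint \<mu> k u + masked_adjoint \<mu> k v"
    by (auto simp: fun_eq_iff masked_adjoint_def sum.distrib[symmetric] algebra_simps
        intro!: sum.cong)
next
  fix r and u :: vec
  show "masked_adjoint \<mu> k (r *\<^sub>R u) = r *\<^sub>R masked_adjoint \<mu> k u"
    by (auto simp: fun_eq_iff masked_adjoint_def sum_distrib_left intro!: sum.cong)
qed

lemma layers_eq_masked_layers:
  assumes "\<forall>i j. k \<le> i \<longrightarrow> i < k + l \<longrightarrow> j < n i \<longrightarrow> relu_consistent (\<mu> i j) (node_from k i j z)"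
  shows "layers n W b k l z = masked_layers \<mu> k l z"
  using assms
proof (induction l)
  case (Suc l)
  then have IH: "layers n W b k l z = masked_layers \<mu> k l z" by auto
  have "j < n (k + l) \<Longrightarrow> relu_consistent (\<mu> (k + l) j) (node_from k (k + l) j z)" for j
    using Suc.prems by auto
  then have "layer n W b (k + l) (layers n W b k l z) j
      = masked_layer \<mu> (k + l) (layers n W b k l z) j" for j
    by (cases "j < n (k + l)")
       (simp_all add: layer_def masked_layer_def node_from_def max_0_if_relu_consistent
         affmap_eq_0_beyond)
  then show ?case by (simp add: fun_eq_iff IH)
qed simp

lemma node_from_eq_masked_node:
  assumes "k \<le> i"
    and "\<forall>i' j. k \<le> i' \<longrightarrow> i' < i \<longrightarrow> j < n i' \<longrightarrow> relu_consistent (\<mu> i' j) (node_from k i' j z)"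
  shows "node_from k i j z = masked_node \<mu> k i j z"
proof -
  have "layers n W b k (i - k) z = masked_layers \<mu> k (i - k) z"
    by (rule layers_eq_masked_layers) (use assms in auto)
  then show ?thesis by (simp add: node_from_def masked_node_def)
qed

lemma node_from_eq_masked_node_if_consistent:
  assumes "\<forall>i j. k \<le> i \<longrightarrow> i \<le> e \<longrightarrow> j < n i \<longrightarrow> relu_consistent (\<mu> i j) (masked_node \<mu> k i j z)"
  shows "k \<le> i \<Longrightarrow> i \<le> e \<Longrightarrow> node_from k i j z = masked_node \<mu> k i j z"
proof (induction i arbitrary: j rule: less_induct)
  case (less i)
  show ?case
  proof (rule node_from_eq_masked_node[OF less.prems(1)], intro allI impI)
    fix i' j' assume "k \<le> i'" "i' < i" "j' < n i'"
    then show "relu_consistent (\<mu> i' j') (node_from k i' j' z)"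
      using less.IH less.prems assms by simp
  qed
qed

end

section \<open>The activation region of a point\<close>

definition sign_compat :: "real \<Rightarrow> real \<Rightarrow> bool" where
  "sign_compat a c \<longleftrightarrow> (0 < c \<longrightarrow> 0 \<le> a) \<and> (c < 0 \<longrightarrow> a \<le> 0) \<and> (c = 0 \<longrightarrow> a = 0)"

lemma sign_compat_refl [simp]: "sign_compat a a"
  by (auto simp: sign_compat_def)

lemma sign_compat_imp_relu_consistent: "sign_compat a c \<Longrightarrow> relu_consistent (0 < c) a"
  by (auto simp: sign_compat_def relu_consistent_def)

context relu_net
begin

definition act_pattern :: "nat \<Rightarrow> vec \<Rightarrow> nat \<Rightarrow> nat \<Rightarrow> bool" where
  "act_pattern k y = (\<lambda>i j. 0 < node_from k i j y)"

definition region :: "nat \<Rightarrow> nat \<Rightarrow> vec \<Rightarrow> vec set" where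
  "region k e y = {z \<in> Rn (n (k - 1)). \<forall>i j. k \<le> i \<longrightarrow> i \<le> e \<longrightarrow> j < n i \<longrightarrow>
      sign_compat (node_from k i j z) (node_from k i j y)}"

definition zero_nodes :: "nat \<Rightarrow> nat \<Rightarrow> vec \<Rightarrow> (nat \<times> nat) set" where
  "zero_nodes k e y = {(i, j). k \<le> i \<and> i \<le> e \<and> j < n i \<and> node_from k i j y = 0}"

definition grad_at :: "nat \<Rightarrow> vec \<Rightarrow> nat \<times> nat \<Rightarrow> vec" where
  "grad_at k y = (\<lambda>(i, j). masked_grad (act_pattern k y) k (i - k) j)"

definition tangent :: "nat \<Rightarrow> nat \<Rightarrow> vec \<Rightarrow> vec set" where
  "tangent k e y =
     {v \<in> Rn (n (k - 1)). \<forall>z\<in>zero_nodes k e y. dotp (n (k - 1)) (grad_at k y z) v = 0}"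

lemma finite_zero_nodes: "finite (zero_nodes k e y)"
proof -
  have "zero_nodes k e y \<subseteq> Sigma {k..e} (\<lambda>i. {..<n i})" by (auto simp: zero_nodes_def)
  then show ?thesis by (rule finite_subset) auto
qed

lemma subspace_tangent: "subspace (tangent k e y)"
  unfolding subspace_def tangent_def
  by (auto simp: dotp_add_right dotp_scaleR_right dotp_zero_right)

lemma grad_at_Rn: "grad_at k y z \<in> Rn (n (k - 1))"
  unfolding grad_at_def by (cases z) (simp only: case_prod_conv masked_grad_Rn)

lemma self_in_region: "y \<in> Rn (n (k - 1)) \<Longrightarrow> y \<in> region k e y"
  by (simp add: region_def)

lemma region_node_from_eq_masked_node:
  assumes "z \<in> region k e y" "k \<le> i" "i \<le> e"
  shows "node_from k i j z = masked_node (act_pattern k y) k i j z"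
proof (rule node_from_eq_masked_node[OF assms(2)], intro allI impI)
  fix i' j assume "k \<le> i'" "i' < i" "j < n i'"
  then have "sign_compat (node_from k i' j z) (node_from k i' j y)"
    using assms by (auto simp: region_def)
  then show "relu_consistent (act_pattern k y i' j) (node_from k i' j z)"
    unfolding act_pattern_def by (rule sign_compat_imp_relu_consistent)
qed

lemma region_node_from_diff:
  assumes "z \<in> region k e y" "y \<in> Rn (n (k - 1))" "k \<le> i" "i \<le> e" "j < n i"
  shows "node_from k i j z - node_from k i j y = dotp (n (k - 1)) (grad_at k y (i, j)) (z - y)"
  using region_node_from_eq_masked_node[OF assms(1,3,4)]
    region_node_from_eq_masked_node[OF self_in_region[OF assms(2)] assms(3,4)]
    masked_node_diff[OF assms(3,5)] by (simp add: grad_at_def)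

lemma region_diff_in_tangent:
  assumes "p \<in> region k e y" "q \<in> region k e y" "y \<in> Rn (n (k - 1))"
  shows "p - q \<in> tangent k e y"
proof -
  have "dotp (n (k - 1)) (grad_at k y z) (p - q) = 0" if z: "z \<in> zero_nodes k e y" for z
  proof -
    obtain i j where ij: "z = (i, j)" "k \<le> i" "i \<le> e" "j < n i" "node_from k i j y = 0"
      using z unfolding zero_nodes_def by blast
    have "node_from k i j p = 0" "node_from k i j q = 0"
      using assms(1,2) ij by (auto simp: region_def sign_compat_def)
    then have "dotp (n (k - 1)) (grad_at k y z) (p - y) = 0"
      "dotp (n (k - 1)) (grad_at k y z) (q - y) = 0"
      using region_node_from_diff[OF assms(1,3) ij(2-4)] region_node_from_diff[OF assms(2,3) ij(2-4)]
        ij(1,5) by auto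
    then show ?thesis using dotp_diff_right[of _ _ "p - y" "q - y"] by simp
  qed
  moreover have "p - q \<in> Rn (n (k - 1))" using assms by (auto simp: region_def)
  ultimately show ?thesis by (simp add: tangent_def)
qed

text \<open>Along the tangent space the zero nodes stay zero; the others keep their sign as long as
  the step is small compared to their value at \<open>y\<close>.\<close>

lemma add_tangent_in_region:
  assumes y: "y \<in> Rn (n (k - 1))" and v: "v \<in> tangent k e y"
    and small: "\<forall>i j. k \<le> i \<longrightarrow> i \<le> e \<longrightarrow> j < n i \<longrightarrow> node_from k i j y \<noteq> 0 \<longrightarrow>
       \<bar>dotp (n (k - 1)) (grad_at k y (i, j)) v\<bar> < \<bar>node_from k i j y\<bar>"
  shows "y + v \<in> region k e y"
proof -
  have masked_value: "masked_node (act_pattern k y) k i j (y + v)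
      = node_from k i j y + dotp (n (k - 1)) (grad_at k y (i, j)) v"
    if "k \<le> i" "i \<le> e" "j < n i" for i j
    using masked_node_diff[OF that(1,3), of "act_pattern k y" "y + v" y]
      region_node_from_eq_masked_node[OF self_in_region[OF y] that(1,2)]
    by (simp add: grad_at_def)
  have compat: "sign_compat (masked_node (act_pattern k y) k i j (y + v)) (node_from k i j y)"
    if "k \<le> i" "i \<le> e" "j < n i" for i j
  proof (cases "node_from k i j y = 0")
    case True
    then have "(i, j) \<in> zero_nodes k e y" using that by (simp add: zero_nodes_def)
    then show ?thesis using v masked_value[OF that] True by (simp add: tangent_def sign_compat_def)
  next
    case False
    then have "\<bar>dotp (n (k - 1)) (grad_at k y (i, j)) v\<bar> < \<bar>node_from k i j y\<bar>"
      using small that by blast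
    then show ?thesis
      using masked_value[OF that] by (auto simp: sign_compat_def abs_if split: if_splits)
  qed
  have "node_from k i j (y + v) = masked_node (act_pattern k y) k i j (y + v)"
    if "k \<le> i" "i \<le> e" for i j
    using compat that unfolding act_pattern_def
    by (intro node_from_eq_masked_node_if_consistent allI impI sign_compat_imp_relu_consistent)
       auto
  then show ?thesis using y v compat by (auto simp: region_def tangent_def)
qed

lemma ex_box_in_region:
  assumes y: "y \<in> Rn (n (k - 1))"
  shows "\<exists>\<delta>>0. \<forall>v\<in>tangent k e y. (\<forall>t<n (k - 1). \<bar>v t\<bar> \<le> \<delta>) \<longrightarrow> y + v \<in> region k e y"
proof -
  define I where "I = Sigma {k..e} (\<lambda>i. {..<n i})"
  have "finite I" by (simp add: I_def)
  from ex_pos_mult_abs_less[OF this, of "\<lambda>(i, j). node_from k i j y"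
      "\<lambda>z. \<Sum>t<n (k - 1). \<bar>grad_at k y z t\<bar>"]
  obtain \<delta> where \<delta>: "\<delta> > 0" "\<forall>z\<in>I. (case z of (i, j) \<Rightarrow> node_from k i j y) \<noteq> 0 \<longrightarrow>
      \<delta> * \<bar>\<Sum>t<n (k - 1). \<bar>grad_at k y z t\<bar>\<bar> < \<bar>case z of (i, j) \<Rightarrow> node_from k i j y\<bar>"
    by blast
  have "y + v \<in> region k e y" if "v \<in> tangent k e y" "\<forall>t<n (k - 1). \<bar>v t\<bar> \<le> \<delta>" for v
  proof (rule add_tangent_in_region[OF y that(1)], intro allI impI)
    fix i j assume ij: "k \<le> i" "i \<le> e" "j < n i" "node_from k i j y \<noteq> 0"
    then have "\<delta> * (\<Sum>t<n (k - 1). \<bar>grad_at k y (i, j) t\<bar>) < \<bar>node_from k i j y\<bar>"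
      using \<delta>(2) by (force simp: I_def)
    moreover have "\<bar>dotp (n (k - 1)) (grad_at k y (i, j)) v\<bar>
        \<le> \<delta> * (\<Sum>t<n (k - 1). \<bar>grad_at k y (i, j) t\<bar>)"
      by (rule dotp_abs_le[OF that(2)])
    ultimately show "\<bar>dotp (n (k - 1)) (grad_at k y (i, j)) v\<bar> < \<bar>node_from k i j y\<bar>"
      by linarith
  qed
  then show ?thesis using \<delta>(1) by blast
qed

lemma span_region_diffs:
  assumes y: "y \<in> Rn (n (k - 1))"
  shows "span {p - q | p q. p \<in> region k e y \<and> q \<in> region k e y} = tangent k e y"
proof (rule span_subspace)
  show "{p - q | p q. p \<in> region k e y \<and> q \<in> region k e y} \<subseteq> tangent k e y"
    using region_diff_in_tangent[OF _ _ y] by blast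
  show "tangent k e y \<subseteq> span {p - q | p q. p \<in> region k e y \<and> q \<in> region k e y}"
  proof
    fix v assume v: "v \<in> tangent k e y"
    obtain \<delta> where \<delta>: "\<delta> > 0"
      "\<forall>v\<in>tangent k e y. (\<forall>t<n (k - 1). \<bar>v t\<bar> \<le> \<delta>) \<longrightarrow> y + v \<in> region k e y"
      using ex_box_in_region[OF y] by blast
    obtain \<epsilon> where \<epsilon>: "\<epsilon> > 0" "\<forall>t\<in>{..<n (k - 1)}. \<delta> \<noteq> 0 \<longrightarrow> \<epsilon> * \<bar>v t\<bar> < \<bar>\<delta>\<bar>"
      using ex_pos_mult_abs_less[of "{..<n (k - 1)}" "\<lambda>_. \<delta>" v] by auto
    have "\<epsilon> *\<^sub>R v \<in> tangent k e y" using v subspace_tangent by (simp add: subspace_scale)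
    moreover have "\<forall>t<n (k - 1). \<bar>(\<epsilon> *\<^sub>R v) t\<bar> \<le> \<delta>"
      using \<epsilon> \<delta>(1) by (auto simp: abs_mult less_imp_le)
    ultimately have "y + \<epsilon> *\<^sub>R v \<in> region k e y" using \<delta>(2) by blast
    then have "(y + \<epsilon> *\<^sub>R v) - y \<in> {p - q | p q. p \<in> region k e y \<and> q \<in> region k e y}"
      using self_in_region[OF y] by blast
    then have "(1 / \<epsilon>) *\<^sub>R (\<epsilon> *\<^sub>R v) \<in> span {p - q | p q. p \<in> region k e y \<and> q \<in> region k e y}"
      by (intro span_scale span_base) simp
    then show "v \<in> span {p - q | p q. p \<in> region k e y \<and> q \<in> region k e y}"
      using \<epsilon>(1) by simp
  qed
qed (rule subspace_tangent)

lemma adim_region: "y \<in> Rn (n (k - 1)) \<Longrightarrow> adim (region k e y) = dim (tangent k e y)"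
  unfolding adim_def by (subst dim_span[symmetric]) (simp add: span_region_diffs)

lemma affine_hull_region_subset:
  assumes y: "y \<in> Rn (n (k - 1))"
  shows "affine hull (region k e y) \<subseteq> (+) y ` tangent k e y"
proof (rule hull_minimal)
  show "region k e y \<subseteq> (+) y ` tangent k e y"
  proof
    fix z assume "z \<in> region k e y"
    then have "z - y \<in> tangent k e y" using region_diff_in_tangent self_in_region y by blast
    then show "z \<in> (+) y ` tangent k e y" by (auto intro: image_eqI[of _ _ "z - y"])
  qed
  show "affine ((+) y ` tangent k e y)"
    using affine_translation subspace_imp_affine[OF subspace_tangent] by blast
qed

lemma rel_interior_region:
  assumes y: "y \<in> Rn (n (k - 1))"
  shows "y \<in> rel_interior (region k e y)"
proof -
  obtain \<delta> where \<delta>: "\<delta> > 0"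
    "\<forall>v\<in>tangent k e y. (\<forall>t<n (k - 1). \<bar>v t\<bar> \<le> \<delta>) \<longrightarrow> y + v \<in> region k e y"
    using ex_box_in_region[OF y] by blast
  define T where "T = (\<Inter>t\<in>{..<n (k - 1)}. {z. \<bar>z t - y t\<bar> < \<delta>})"
  have "open T" unfolding T_def
    by (intro open_INT open_Collect_less ballI finite_lessThan)
       (intro continuous_intros continuous_on_product_coordinates)+
  moreover have "T \<inter> affine hull (region k e y) \<subseteq> region k e y"
  proof
    fix z assume z: "z \<in> T \<inter> affine hull (region k e y)"
    then obtain v where v: "z = y + v" "v \<in> tangent k e y"
      using affine_hull_region_subset[OF y] by blast
    then have "\<forall>t<n (k - 1). \<bar>v t\<bar> \<le> \<delta>" using z by (auto simp: T_def less_imp_le)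
    then show "z \<in> region k e y" using \<delta>(2) v by blast
  qed
  ultimately show ?thesis using self_in_region[OF y] \<delta>(1) by (auto simp: mem_rel_interior T_def)
qed

end

section \<open>Cells of the canonical complex as sign cells\<close>

definition sign_cond :: "int \<Rightarrow> real \<Rightarrow> bool" where
  "sign_cond s a \<longleftrightarrow> (s = 1 \<longrightarrow> 0 \<le> a) \<and> (s = -1 \<longrightarrow> a \<le> 0) \<and> (s = 0 \<longrightarrow> a = 0)"

definition sign_int :: "real \<Rightarrow> int" where
  "sign_int c = (if 0 < c then 1 else if c < 0 then -1 else 0)"

lemma sign_compat_iff_sign_cond: "sign_compat a c \<longleftrightarrow> sign_cond (sign_int c) a"
  by (auto simp: sign_compat_def sign_cond_def sign_int_def)

lemma sign_int_range: "sign_int c \<in> {-1, 0, 1}"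
  by (auto simp: sign_int_def)

lemma sign_cond_imp_relu_consistent: "s \<in> {-1, 0, 1} \<Longrightarrow> sign_cond s a \<Longrightarrow> relu_consistent (s = 1) a"
  by (auto simp: sign_cond_def relu_consistent_def)

lemma sign_cond_sign_compat: "sign_cond s c \<Longrightarrow> sign_compat a c \<Longrightarrow> sign_cond s a"
  by (auto simp: sign_cond_def sign_compat_def)

lemma sign_cond_pos_imp: "s \<in> {-1, 0, 1} \<Longrightarrow> sign_cond s c \<Longrightarrow> 0 < c \<Longrightarrow> s = 1"
  and sign_cond_neg_imp: "s \<in> {-1, 0, 1} \<Longrightarrow> sign_cond s c \<Longrightarrow> c < 0 \<Longrightarrow> s = -1"
  by (auto simp: sign_cond_def)

lemma sign_cond_convex:
  assumes "sign_cond s a" "sign_cond s c" "0 \<le> t" "t \<le> 1"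
  shows "sign_cond s (a + t * (c - a))"
proof -
  have "a + t * (c - a) = (1 - t) * a + t * c" by (simp add: algebra_simps)
  then show ?thesis using assms unfolding sign_cond_def
    by (auto intro!: add_nonneg_nonneg add_nonpos_nonpos mult_nonneg_nonneg mult_nonneg_nonpos)
qed

context relu_net
begin

definition sign_cell :: "nat \<Rightarrow> nat \<Rightarrow> (nat \<Rightarrow> nat \<Rightarrow> int) \<Rightarrow> vec set" where
  "sign_cell k l \<sigma> = {z \<in> Rn (n (k - 1)). \<forall>i j. k \<le> i \<longrightarrow> i < k + l \<longrightarrow> j < n i \<longrightarrow>
      sign_cond (\<sigma> i j) (node_from k i j z)}"

definition hyper_cell :: "nat \<Rightarrow> (nat \<Rightarrow> int) \<Rightarrow> vec set" where
  "hyper_cell i \<tau> = {x \<in> Rn (n (i - 1)). \<forall>j<n i. sign_cond (\<tau> j) (affmap n W b i x j)}"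

lemma hcells_eq:
  "hcells n W b i = {R. R \<noteq> {} \<and> (\<exists>\<tau>. (\<forall>j. \<tau> j \<in> {-1, 0, 1}) \<and> R = hyper_cell i \<tau>)}"
  unfolding hcells_def hyper_cell_def sign_cond_def by simp

lemma sign_cell_Suc:
  "sign_cell k l \<sigma> \<inter> layers n W b k l -` hyper_cell (k + l) \<tau> = sign_cell k (Suc l) (\<sigma>(k + l := \<tau>))"
proof -
  have last_layer: "(\<forall>i j. k \<le> i \<longrightarrow> i < k + Suc l \<longrightarrow> j < n i \<longrightarrow> P i j) \<longleftrightarrow>
      (\<forall>i j. k \<le> i \<longrightarrow> i < k + l \<longrightarrow> j < n i \<longrightarrow> P i j) \<and> (\<forall>j<n (k + l). P (k + l) j)" for P
    by (auto simp: less_Suc_eq) (use le_add1 in blast)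
  have "(\<forall>i j. k \<le> i \<longrightarrow> i < k + l \<longrightarrow> j < n i \<longrightarrow> sign_cond ((\<sigma>(k + l := \<tau>)) i j) (node_from k i j z))
      \<longleftrightarrow> (\<forall>i j. k \<le> i \<longrightarrow> i < k + l \<longrightarrow> j < n i \<longrightarrow> sign_cond (\<sigma> i j) (node_from k i j z))" for z
    by auto
  moreover have "node_from k (k + l) j z = affmap n W b (k + l) (layers n W b k l z) j" for j z
    by (simp add: node_from_def)
  ultimately show ?thesis
    unfolding sign_cell_def hyper_cell_def last_layer using layers_Rn by auto
qed

lemma canon_eq_sign_cells:
  "canon n W b k l = {sign_cell k l \<sigma> | \<sigma>. (\<forall>i j. \<sigma> i j \<in> {-1, 0, 1}) \<and> sign_cell k l \<sigma> \<noteq> {}}"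
proof (induction l)
  case 0
  have "sign_cell k 0 \<sigma> = Rn (n (k - 1))" for \<sigma> by (auto simp: sign_cell_def)
  moreover have "Rn (n (k - 1)) \<noteq> {}" using Rn_zero by blast
  ultimately show ?case by (auto intro: exI[of _ "\<lambda>i j. 0"])
next
  case (Suc l)
  show ?case
  proof (intro set_eqI iffI)
    fix X assume "X \<in> canon n W b k (Suc l)"
    then obtain C R where CR: "X = C \<inter> layers n W b k l -` R" "C \<in> canon n W b k l"
      "R \<in> hcells n W b (k + l)" "X \<noteq> {}"
      by auto
    obtain \<sigma> where \<sigma>: "C = sign_cell k l \<sigma>" "\<forall>i j. \<sigma> i j \<in> {-1, 0, 1}"
      using CR(2) Suc.IH by auto
    obtain \<tau> where \<tau>: "R = hyper_cell (k + l) \<tau>" "\<forall>j. \<tau> j \<in> {-1, 0, 1}"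
      using CR(3) hcells_eq by auto
    have "X = sign_cell k (Suc l) (\<sigma>(k + l := \<tau>))" using CR(1) \<sigma> \<tau> sign_cell_Suc by simp
    moreover have "\<forall>i j. (\<sigma>(k + l := \<tau>)) i j \<in> {-1, 0, 1}" using \<sigma>(2) \<tau>(2) by simp
    ultimately show "X \<in> {sign_cell k (Suc l) \<sigma> | \<sigma>.
        (\<forall>i j. \<sigma> i j \<in> {-1, 0, 1}) \<and> sign_cell k (Suc l) \<sigma> \<noteq> {}}"
      using CR(4) by blast
  next
    fix X assume "X \<in> {sign_cell k (Suc l) \<sigma> | \<sigma>.
        (\<forall>i j. \<sigma> i j \<in> {-1, 0, 1}) \<and> sign_cell k (Suc l) \<sigma> \<noteq> {}}"
    then obtain \<sigma> where \<sigma>: "X = sign_cell k (Suc l) \<sigma>" "\<forall>i j. \<sigma> i j \<in> {-1, 0, 1}" "X \<noteq> {}"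
      by auto
    have X: "X = sign_cell k l \<sigma> \<inter> layers n W b k l -` hyper_cell (k + l) (\<sigma> (k + l))"
      using sign_cell_Suc[of k l \<sigma> "\<sigma> (k + l)"] \<sigma>(1) by simp
    then have "sign_cell k l \<sigma> \<in> canon n W b k l" using Suc.IH \<sigma>(2,3) by auto
    moreover have "hyper_cell (k + l) (\<sigma> (k + l)) \<in> hcells n W b (k + l)"
      using X \<sigma>(2,3) unfolding hcells_eq by blast
    ultimately show "X \<in> canon n W b k (Suc l)" using X \<sigma>(3) by auto
  qed
qed

lemma region_eq_sign_cell:
  "k \<le> Suc e \<Longrightarrow> region k e y = sign_cell k (Suc e - k) (\<lambda>i j. sign_int (node_from k i j y))"
  unfolding region_def sign_cell_def sign_compat_iff_sign_cond
  by (intro Collect_cong conj_cong refl) (auto simp: less_Suc_eq_le)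

lemma region_in_canon:
  assumes "y \<in> Rn (n (k - 1))" "k \<le> Suc e"
  shows "region k e y \<in> canon n W b k (Suc e - k)"
proof -
  have "sign_cell k (Suc e - k) (\<lambda>i j. sign_int (node_from k i j y)) \<noteq> {}"
    using self_in_region[OF assms(1)] region_eq_sign_cell[OF assms(2)] by auto
  moreover have "\<forall>i j. sign_int (node_from k i j y) \<in> {-1, 0, 1}" using sign_int_range by blast
  ultimately show ?thesis unfolding canon_eq_sign_cells region_eq_sign_cell[OF assms(2)] by blast
qed

lemma region_in_hcells:
  assumes "y \<in> Rn (n (k - 1))"
  shows "region k k y \<in> hcells n W b k"
proof -
  have "region k k y = hyper_cell k (\<lambda>j. sign_int (affmap n W b k y j))"
  proof -
    have "(\<forall>i j. k \<le> i \<longrightarrow> i \<le> k \<longrightarrow> j < n i \<longrightarrow> P i j) \<longleftrightarrow> (\<forall>j<n k. P k j)" for P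
      by (auto dest: le_antisym)
    then show ?thesis
      unfolding region_def hyper_cell_def sign_compat_iff_sign_cond by (simp add: node_from_self)
  qed
  then show ?thesis
    using self_in_region[OF assms] unfolding hcells_eq
    by (intro CollectI conjI exI[of _ "\<lambda>j. sign_int (affmap n W b k y j)"]) (auto simp: sign_int_def)
qed

lemma layer_eq_masked_layer_if_in_region:
  assumes "p \<in> region k k y"
  shows "layer n W b k p = masked_layer (act_pattern k y) k p"
proof -
  have "layers n W b k 1 p = masked_layers (act_pattern k y) k 1 p"
  proof (rule layers_eq_masked_layers, intro allI impI)
    fix i j assume ij: "k \<le> i" "i < k + 1" "j < n i"
    then have "i = k" by simp
    then have "sign_compat (node_from k i j p) (node_from k i j y)"
      using assms ij(3) by (auto simp: region_def)
    then show "relu_consistent (act_pattern k y i j) (node_from k i j p)"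
      unfolding act_pattern_def by (rule sign_compat_imp_relu_consistent)
  qed
  then show ?thesis by simp
qed

end

section \<open>Independence of the gradients of the vanishing nodes\<close>

context relu_net
begin

definition hyperplanes_through :: "nat \<Rightarrow> vec \<Rightarrow> nat set" where
  "hyperplanes_through k y = {j. j < n k \<and> affmap n W b k y j = 0}"

lemma generic_imp_independent_rows:
  assumes gen: "generic n W b m" and k: "1 \<le> k" "k \<le> Suc m" and y: "y \<in> Rn (n (k - 1))"
  shows "independent_family (hyperplanes_through k y) (weight_row k)"
proof -
  define S where "S = hyperplanes_through k y"
  define d where "d = n (k - 1)"
  define X where "X = {x \<in> Rn d. \<forall>j\<in>S. affmap n W b k x j = 0}"
  define K where "K = {v \<in> Rn d. \<forall>g\<in>weight_row k ` S. dotp d g v = 0}"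
  have S: "S \<subseteq> {..<n k}" "finite S" by (auto simp: S_def hyperplanes_through_def)
  have "y \<in> X" using y by (simp add: X_def S_def d_def hyperplanes_through_def)
  moreover have "(card S \<le> d \<longrightarrow> X \<noteq> {} \<and> adim X = d - card S) \<and> (d < card S \<longrightarrow> X = {})"
    using gen k S(1) unfolding generic_def Let_def X_def d_def by auto
  ultimately have card_S: "card S \<le> d" "adim X = d - card S" by auto
  have "{p - q | p q. p \<in> X \<and> q \<in> X} = K"
  proof (intro set_eqI iffI)
    fix w assume "w \<in> {p - q | p q. p \<in> X \<and> q \<in> X}"
    then obtain p q where pq: "w = p - q" "p \<in> X" "q \<in> X" by blast
    have "dotp d (weight_row k j) (p - q) = 0" if "j \<in> S" for j
      using that S(1) affmap_diff[of j k p q] pq by (auto simp: X_def d_def)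
    then show "w \<in> K" using pq by (auto simp: K_def X_def d_def)
  next
    fix v assume v: "v \<in> K"
    then have "y + v \<in> X"
      using \<open>y \<in> X\<close> S(1) affmap_add[of _ k y v] by (auto simp: X_def K_def d_def)
    then show "v \<in> {p - q | p q. p \<in> X \<and> q \<in> X}"
      using \<open>y \<in> X\<close> by (intro CollectI exI[of _ "y + v"] exI[of _ y]) simp
  qed
  then have "adim X = dim K" by (simp add: adim_def)
  moreover have "dim K + dim (weight_row k ` S) = d"
    unfolding K_def d_def by (rule dim_orthogonal_complement_Rn) (use S(2) weight_row_Rn in auto)
  ultimately have "dim (weight_row k ` S) = card S" using card_S by simp
  then show ?thesis unfolding S_def by (rule independent_family_if_dim_eq_card[OF S(2)[unfolded S_def]])
qed

lemma zero_nodes_eq_first_later: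
  assumes "k \<le> e"
  shows "zero_nodes k e y = Pair k ` hyperplanes_through k y \<union> zero_nodes (Suc k) e (layer n W b k y)"
proof (intro set_eqI iffI)
  fix z assume "z \<in> zero_nodes k e y"
  then obtain i j where "z = (i, j)" "k \<le> i" "i \<le> e" "j < n i" "node_from k i j y = 0"
    by (auto simp: zero_nodes_def)
  then show "z \<in> Pair k ` hyperplanes_through k y \<union> zero_nodes (Suc k) e (layer n W b k y)"
    by (cases "i = k")
       (auto simp: zero_nodes_def hyperplanes_through_def node_from_self node_from_Suc)
next
  fix z assume "z \<in> Pair k ` hyperplanes_through k y \<union> zero_nodes (Suc k) e (layer n W b k y)"
  then show "z \<in> zero_nodes k e y"
    using assms by (auto simp: zero_nodes_def hyperplanes_through_def node_from_self node_from_Suc)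
qed

lemma grad_at_first_layer: "grad_at k y (k, j) = weight_row k j"
  by (simp add: grad_at_def)

lemma grad_at_later_layer:
  assumes "k < i"
  shows "grad_at k y (i, j) = masked_adjoint (act_pattern k y) k (grad_at (Suc k) (layer n W b k y) (i, j))"
proof -
  have "i - k = Suc (i - Suc k)" using assms by simp
  moreover have "\<forall>i'\<ge>Suc k. act_pattern k y i' = act_pattern (Suc k) (layer n W b k y) i'"
    by (auto simp: act_pattern_def fun_eq_iff node_from_Suc)
  ultimately show ?thesis
    unfolding grad_at_def
    using masked_grad_cong[of "Suc k" "act_pattern k y" "act_pattern (Suc k) (layer n W b k y)"]
    by simp
qed

text \<open>The chain rule, split at the first layer.\<close>

lemma sum_grad_at_zero_nodes:
  fixes k e :: nat and y :: vec
  defines "y' \<equiv> layer n W b k y"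
  assumes "k \<le> e"
  shows "(\<Sum>z\<in>zero_nodes k e y. c z *\<^sub>R grad_at k y z)
    = (\<Sum>j\<in>hyperplanes_through k y. c (k, j) *\<^sub>R weight_row k j)
      + masked_adjoint (act_pattern k y) k (\<Sum>z\<in>zero_nodes (Suc k) e y'. c z *\<^sub>R grad_at (Suc k) y' z)"
proof -
  have "finite (Pair k ` hyperplanes_through k y)" "finite (zero_nodes (Suc k) e y')"
    "Pair k ` hyperplanes_through k y \<inter> zero_nodes (Suc k) e y' = {}"
    using finite_zero_nodes by (auto simp: hyperplanes_through_def zero_nodes_def)
  then have "(\<Sum>z\<in>zero_nodes k e y. c z *\<^sub>R grad_at k y z)
      = (\<Sum>z\<in>Pair k ` hyperplanes_through k y. c z *\<^sub>R grad_at k y z)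
        + (\<Sum>z\<in>zero_nodes (Suc k) e y'. c z *\<^sub>R grad_at k y z)"
    unfolding zero_nodes_eq_first_later[OF \<open>k \<le> e\<close>] y'_def by (rule sum.union_disjoint)
  moreover have "inj_on (Pair k) (hyperplanes_through k y)" by (simp add: inj_on_def)
  moreover have "grad_at k y z = masked_adjoint (act_pattern k y) k (grad_at (Suc k) y' z)"
    if "z \<in> zero_nodes (Suc k) e y'" for z
    using that grad_at_later_layer unfolding y'_def by (auto simp: zero_nodes_def)
  ultimately show ?thesis
    by (simp add: sum.reindex grad_at_first_layer linear_sum[OF linear_masked_adjoint]
        linear_cmul[OF linear_masked_adjoint])
qed

lemma dotp_grad_combination_tangent:
  "v \<in> tangent k e y \<Longrightarrow> dotp (n (k - 1)) (\<Sum>z\<in>zero_nodes k e y. c z *\<^sub>R grad_at k y z) v = 0"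
  by (auto simp: tangent_def dotp_sum_left dotp_scaleR_left intro!: sum.neutral)

lemma dotp_weight_row_tangent:
  assumes "j \<in> hyperplanes_through k y" "v \<in> tangent k e y" "k \<le> e"
  shows "dotp (n (k - 1)) (weight_row k j) v = 0"
proof -
  have "(k, j) \<in> zero_nodes k e y"
    using assms zero_nodes_eq_first_later[of k e y] by blast
  then show ?thesis using assms(2) grad_at_first_layer[of k y j] by (auto simp: tangent_def)
qed

text \<open>The covector \<open>u\<close> annihilates the image of the first-layer cell through \<open>y\<close> (via the
  adjoint) and the tangent space of the later cell through \<open>F_k y\<close>; transversality says these two
  spaces span \<open>R^(n k)\<close>.\<close>

lemma supertransversal_covector_eq_0:
  assumes st: "supertransversal n W b m" and k: "1 \<le> k" "k \<le> m"
    and y: "y \<in> Rn (n (k - 1))" and u: "u \<in> Rn (n k)"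
    and first: "\<forall>v\<in>tangent k k y. dotp (n (k - 1)) (masked_adjoint (act_pattern k y) k u) v = 0"
    and later: "\<forall>v\<in>tangent (Suc k) (Suc m) (layer n W b k y). dotp (n k) u v = 0"
  shows "u = 0"
proof -
  define y' where "y' = layer n W b k y"
  define C where "C = region k k y"
  define D where "D = region (Suc k) (Suc m) y'"
  define G where "G = {layer n W b k p - layer n W b k q | p q. p \<in> C \<and> q \<in> C}
      \<union> {v - w | v w. v \<in> D \<and> w \<in> D}"
  have y': "y' \<in> Rn (n (Suc k - 1))" by (simp add: y'_def layer_Rn)
  have "C \<in> hcells n W b k" unfolding C_def by (rule region_in_hcells[OF y])
  moreover have "D \<in> canon n W b (Suc k) (Suc m - k)"
    using region_in_canon[OF y', of "Suc m"] k unfolding D_def by simp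
  ultimately have transverse: "transverse_on_cell (layer n W b k) C D (n k)"
    using st k unfolding supertransversal_def by auto
  have "y \<in> rel_interior C" "layer n W b k y \<in> rel_interior D"
    using rel_interior_region[OF y] rel_interior_region[OF y'] by (simp_all add: C_def D_def y'_def)
  from transverse[unfolded transverse_on_cell_def, rule_format, OF this]
  have span: "span G = Rn (n k)" unfolding G_def .
  have "dotp (n k) w u = 0" if "w \<in> G" for w
    using that unfolding G_def
  proof (elim UnE CollectE exE conjE)
    fix p q assume w: "w = layer n W b k p - layer n W b k q" and pq: "p \<in> C" "q \<in> C"
    have "w = masked_layer (act_pattern k y) k p - masked_layer (act_pattern k y) k q"
      using w pq layer_eq_masked_layer_if_in_region unfolding C_def by simp
    moreover have "p - q \<in> tangent k k y" using region_diff_in_tangent[OF _ _ y] pq C_def by blast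
    ultimately show "dotp (n k) w u = 0"
      using first by (simp add: dotp_commute[of "n k" _ u] dotp_masked_layer_diff)
  next
    fix v w' assume "w = v - w'" "v \<in> D" "w' \<in> D"
    then have "w \<in> tangent (Suc k) (Suc m) y'"
      using region_diff_in_tangent[OF _ _ y'] unfolding D_def by blast
    then show "dotp (n k) w u = 0" using later dotp_commute[of "n k" w u] by (simp add: y'_def)
  qed
  then have "dotp (n k) u u = 0" using dotp_span_eq_0[of G "n k" u u] span u by blast
  then show ?thesis using dotp_self_eq_0 u by blast
qed

lemma zero_node_grads_independent_step:
  assumes gen: "generic n W b m" and st: "supertransversal n W b m"
    and k: "1 \<le> k" "k \<le> Suc m" and y: "y \<in> Rn (n (k - 1))"
    and IH: "k \<le> m \<Longrightarrow> independent_family (zero_nodes (Suc k) (Suc m) (layer n W b k y))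
                                             (grad_at (Suc k) (layer n W b k y))"
  shows "independent_family (zero_nodes k (Suc m) y) (grad_at k y)"
  unfolding independent_family_def
proof (intro allI impI)
  fix c assume "(\<Sum>z\<in>zero_nodes k (Suc m) y. c z *\<^sub>R grad_at k y z) = 0"
  define y' where "y' = layer n W b k y"
  define r where "r = (\<Sum>j\<in>hyperplanes_through k y. c (k, j) *\<^sub>R weight_row k j)"
  define u where "u = (\<Sum>z\<in>zero_nodes (Suc k) (Suc m) y'. c z *\<^sub>R grad_at (Suc k) y' z)"
  have r_u: "r + masked_adjoint (act_pattern k y) k u = 0"
    using \<open>(\<Sum>z\<in>_. _) = 0\<close> sum_grad_at_zero_nodes[OF k(2), where y = y and c = c]
    unfolding r_def u_def y'_def by simp
  have later_0: "u = 0 \<and> (\<forall>z\<in>zero_nodes (Suc k) (Suc m) y'. c z = 0)"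
  proof (cases "k \<le> m")
    case True
    have "dotp (n (k - 1)) r v = 0" if "v \<in> tangent k k y" for v
      using dotp_weight_row_tangent[OF _ that] unfolding r_def
      by (simp add: dotp_sum_left dotp_scaleR_left)
    then have first: "\<forall>v\<in>tangent k k y. dotp (n (k - 1)) (masked_adjoint (act_pattern k y) k u) v = 0"
      using r_u dotp_scaleR_left[of _ "-1" r] by (simp add: add_eq_0_iff)
    have later: "\<forall>v\<in>tangent (Suc k) (Suc m) (layer n W b k y). dotp (n k) u v = 0"
      using dotp_grad_combination_tangent[where k = "Suc k" and c = c] unfolding u_def y'_def by simp
    have "u \<in> Rn (n k)" unfolding u_def using grad_at_Rn[of "Suc k" y'] by (intro Rn_sum Rn_scaleR) simp
    from supertransversal_covector_eq_0[OF st k(1) True y this first later]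
    have "u = 0" .
    then show ?thesis
      using IH[OF True, unfolded independent_family_def, rule_format, of c]
      unfolding u_def y'_def by blast
  next
    case False
    then have "zero_nodes (Suc k) (Suc m) y' = {}" by (auto simp: zero_nodes_def)
    then show ?thesis by (simp add: u_def)
  qed
  then have "r = 0" using r_u linear_0[OF linear_masked_adjoint] by simp
  from generic_imp_independent_rows[OF gen k y, unfolded independent_family_def, rule_format,
      OF this[unfolded r_def]]
  have "\<forall>j\<in>hyperplanes_through k y. c (k, j) = 0" by blast
  then show "\<forall>z\<in>zero_nodes k (Suc m) y. c z = 0"
    using later_0 unfolding zero_nodes_eq_first_later[OF k(2)] y'_def by blast
qed

lemma zero_node_grads_independent:
  assumes gen: "generic n W b m" and st: "supertransversal n W b m"
  shows "k \<le> Suc m \<Longrightarrow> 1 \<le> k \<Longrightarrow> y \<in> Rn (n (k - 1)) \<Longrightarrow>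
    independent_family (zero_nodes k (Suc m) y) (grad_at k y)"
proof (induction k arbitrary: y rule: inc_induct)
  case base
  show ?case by (rule zero_node_grads_independent_step[OF gen st base(1) order.refl base(2)]) simp
next
  case (step i)
  have "i \<le> Suc m" using step.hyps by simp
  moreover have "independent_family (zero_nodes (Suc i) (Suc m) (layer n W b i y))
      (grad_at (Suc i) (layer n W b i y))"
    using step.IH[of "layer n W b i y"] layer_Rn by simp
  ultimately show ?case by (rule zero_node_grads_independent_step[OF gen st step.prems(1) _ step.prems(2)])
qed

end

section \<open>Every cell is the activation region of its relative interior points\<close>

context relu_net
begin

lemma sign_cell_node_from_eq_masked_node:
  assumes \<sigma>: "\<forall>i j. \<sigma> i j \<in> {-1, 0, 1}" and p: "p \<in> sign_cell k l \<sigma>" and i: "k \<le> i" "i < k + l"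
  shows "node_from k i j p = masked_node (\<lambda>i j. \<sigma> i j = 1) k i j p"
proof (rule node_from_eq_masked_node[OF i(1)], intro allI impI)
  fix i' j' assume "k \<le> i'" "i' < i" "j' < n i'"
  then have "sign_cond (\<sigma> i' j') (node_from k i' j' p)" using p i by (auto simp: sign_cell_def)
  then show "relu_consistent (\<sigma> i' j' = 1) (node_from k i' j' p)"
    using \<sigma> sign_cond_imp_relu_consistent by blast
qed

lemma sign_cell_node_from_diff:
  assumes \<sigma>: "\<forall>i j. \<sigma> i j \<in> {-1, 0, 1}" and p: "p \<in> sign_cell k l \<sigma>" and q: "q \<in> sign_cell k l \<sigma>"
    and i: "k \<le> i" "i < k + l" "j < n i"
  shows "node_from k i j p - node_from k i j q
    = dotp (n (k - 1)) (masked_grad (\<lambda>i j. \<sigma> i j = 1) k (i - k) j) (p - q)"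
  using sign_cell_node_from_eq_masked_node[OF \<sigma> p i(1,2)]
    sign_cell_node_from_eq_masked_node[OF \<sigma> q i(1,2)] masked_node_diff[OF i(1,3)]
  by simp

lemma sign_cell_node_from_on_line:
  assumes \<sigma>: "\<forall>i j. \<sigma> i j \<in> {-1, 0, 1}"
    and "w \<in> sign_cell k l \<sigma>" "x \<in> sign_cell k l \<sigma>" "y \<in> sign_cell k l \<sigma>"
    and "w - x = t *\<^sub>R (y - x)" and "k \<le> i" "i < k + l" "j < n i"
  shows "node_from k i j w = node_from k i j x + t * (node_from k i j y - node_from k i j x)"
  using sign_cell_node_from_diff[OF \<sigma> assms(2,3) assms(6-)]
    sign_cell_node_from_diff[OF \<sigma> assms(4,3) assms(6-)]
  unfolding assms(5) by (simp add: dotp_scaleR_right)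

lemma convex_sign_cell:
  assumes \<sigma>: "\<forall>i j. \<sigma> i j \<in> {-1, 0, 1}" and x: "x \<in> sign_cell k l \<sigma>" and y: "y \<in> sign_cell k l \<sigma>"
    and t: "0 \<le> t" "t \<le> 1"
  shows "x + t *\<^sub>R (y - x) \<in> sign_cell k l \<sigma>"
proof -
  define w where "w = x + t *\<^sub>R (y - x)"
  define \<mu> where "\<mu> = (\<lambda>i j. \<sigma> i j = 1)"
  have masked: "masked_node \<mu> k i j w = node_from k i j x + t * (node_from k i j y - node_from k i j x)"
    if i: "k \<le> i" "i < k + l" "j < n i" for i j
  proof -
    have "masked_node \<mu> k i j w - masked_node \<mu> k i j x
        = dotp (n (k - 1)) (masked_grad \<mu> k (i - k) j) (t *\<^sub>R (y - x))"
      using masked_node_diff[OF i(1,3), of \<mu> w x] by (simp add: w_def)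
    also have "\<dots> = t * (node_from k i j y - node_from k i j x)"
      using sign_cell_node_from_diff[OF \<sigma> y x i] by (simp add: dotp_scaleR_right \<mu>_def)
    finally show ?thesis using sign_cell_node_from_eq_masked_node[OF \<sigma> x i(1,2)] by (simp add: \<mu>_def)
  qed
  have cond: "sign_cond (\<sigma> i j) (masked_node \<mu> k i j w)" if "k \<le> i" "i < k + l" "j < n i" for i j
    using x y that masked[OF that] sign_cond_convex t by (auto simp: sign_cell_def)
  have "node_from k i j w = masked_node \<mu> k i j w" if "k \<le> i" "i < k + l" for i j
  proof (rule node_from_eq_masked_node_if_consistent[where e = "k + l - 1"], intro allI impI)
    fix i' j' assume "k \<le> i'" "i' \<le> k + l - 1" "j' < n i'"
    then show "relu_consistent (\<mu> i' j') (masked_node \<mu> k i' j' w)"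
      using cond[of i' j'] \<sigma> sign_cond_imp_relu_consistent that unfolding \<mu>_def by simp
  qed (use that in auto)
  then have "sign_cond (\<sigma> i j) (node_from k i j w)" if "k \<le> i" "i < k + l" "j < n i" for i j
    using cond that by simp
  moreover have "w \<in> Rn (n (k - 1))" using x y by (auto simp: sign_cell_def w_def)
  ultimately show ?thesis by (simp add: sign_cell_def w_def)
qed

text \<open>A node vanishing at a relative interior point vanishes on the whole cell: the line through
  \<open>x\<close> and \<open>y\<close> can be continued a little beyond \<open>x\<close> inside the cell, where the node has the
  opposite sign to its value at \<open>y\<close>.\<close>

lemma sign_cell_node_from_eq_0_if_rel_interior:
  assumes \<sigma>: "\<forall>i j. \<sigma> i j \<in> {-1, 0, 1}" and x: "x \<in> rel_interior (sign_cell k l \<sigma>)"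
    and y: "y \<in> sign_cell k l \<sigma>" and i: "k \<le> i" "i < k + l" "j < n i"
    and x_0: "node_from k i j x = 0"
  shows "node_from k i j y = 0"
proof -
  have x_in: "x \<in> sign_cell k l \<sigma>" using x rel_interior_subset by blast
  obtain T where T: "open T" "x \<in> T" "T \<inter> affine hull (sign_cell k l \<sigma>) \<subseteq> sign_cell k l \<sigma>"
    using x by (auto simp: mem_rel_interior)
  define f where "f s = x + s *\<^sub>R (x - y)" for s :: real
  have "continuous_on UNIV f"
    unfolding f_def by (rule continuous_on_coordinatewise_then_product) (simp add: continuous_intros)
  then have "open (f -` T)" using T(1) open_vimage by blast
  moreover have "0 \<in> f -` T" using T(2) by (simp add: f_def)
  ultimately obtain e where e: "e > 0" "ball 0 e \<subseteq> f -` T" using open_contains_ball_eq by blast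
  define s where "s = e / 2"
  have "s > 0" "s \<in> ball 0 e" using e(1) by (simp_all add: s_def)
  then have s: "s > 0" "f s \<in> T" using e(2) by blast+
  have "f s = (1 + s) *\<^sub>R x + (- s) *\<^sub>R y" by (simp add: f_def algebra_simps)
  also have "\<dots> \<in> affine hull (sign_cell k l \<sigma>)"
    by (rule mem_affine[OF affine_affine_hull hull_inc[OF x_in] hull_inc[OF y]]) simp
  finally have w: "f s \<in> sign_cell k l \<sigma>" using s(2) T(3) by auto
  have "f s - x = (- s) *\<^sub>R (y - x)" by (simp add: f_def algebra_simps)
  then have "node_from k i j (f s) = - s * node_from k i j y"
    using sign_cell_node_from_on_line[OF \<sigma> w x_in y _ i, of "- s"] x_0 by simp
  moreover have "sign_cond (\<sigma> i j) (node_from k i j (f s))" "sign_cond (\<sigma> i j) (node_from k i j y)"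
    using w y i by (auto simp: sign_cell_def)
  ultimately show ?thesis
    using \<sigma> s(1) unfolding sign_cond_def by (auto simp: mult_le_0_iff zero_le_mult_iff)
qed

lemma sign_cell_eq_region:
  assumes \<sigma>: "\<forall>i j. \<sigma> i j \<in> {-1, 0, 1}" and x: "x \<in> sign_cell 1 l \<sigma>"
    and zeros: "\<And>y i j. y \<in> sign_cell 1 l \<sigma> \<Longrightarrow> (i, j) \<in> zero_nodes 1 l x \<Longrightarrow> node_from 1 i j y = 0"
  shows "sign_cell 1 l \<sigma> = region 1 l x"
proof
  have cond: "sign_cond (\<sigma> i j) (node_from 1 i j z)"
    if "z \<in> sign_cell 1 l \<sigma>" "1 \<le> i" "i \<le> l" "j < n i" for z i j
    using that by (auto simp: sign_cell_def)
  show "region 1 l x \<subseteq> sign_cell 1 l \<sigma>"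
  proof
    fix z assume z: "z \<in> region 1 l x"
    have "sign_cond (\<sigma> i j) (node_from 1 i j z)" if "1 \<le> i" "i \<le> l" "j < n i" for i j
      using sign_cond_sign_compat[OF cond[OF x that]] z that by (auto simp: region_def)
    then show "z \<in> sign_cell 1 l \<sigma>" using z by (auto simp: region_def sign_cell_def)
  qed
  show "sign_cell 1 l \<sigma> \<subseteq> region 1 l x"
  proof
    fix y assume y: "y \<in> sign_cell 1 l \<sigma>"
    have "sign_compat (node_from 1 i j y) (node_from 1 i j x)" if i: "1 \<le> i" "i \<le> l" "j < n i" for i j
    proof -
      have "\<sigma> i j = 1" if "0 < node_from 1 i j x"
        using sign_cond_pos_imp \<sigma> cond[OF x i] that by blast
      moreover have "\<sigma> i j = -1" if "node_from 1 i j x < 0"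
        using sign_cond_neg_imp \<sigma> cond[OF x i] that by blast
      moreover have "node_from 1 i j y = 0" if "node_from 1 i j x = 0"
        using zeros[OF y] i that by (simp add: zero_nodes_def)
      ultimately show ?thesis using cond[OF y i] by (auto simp: sign_compat_def sign_cond_def)
    qed
    then show "y \<in> region 1 l x" using y by (auto simp: region_def sign_cell_def)
  qed
qed

lemma sign_cell_fewer_zero_nodes:
  assumes \<sigma>: "\<forall>i j. \<sigma> i j \<in> {-1, 0, 1}" and x: "x \<in> sign_cell 1 l \<sigma>" and y: "y \<in> sign_cell 1 l \<sigma>"
    and ij: "(i, j) \<in> zero_nodes 1 l x" "node_from 1 i j y \<noteq> 0"
  shows "\<exists>w\<in>sign_cell 1 l \<sigma>. zero_nodes 1 l w \<subset> zero_nodes 1 l x"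
proof -
  define I where "I = Sigma {1..l} (\<lambda>i. {..<n i})"
  have "finite I" by (simp add: I_def)
  from ex_pos_mult_abs_less[OF this, of "\<lambda>(i, j). node_from 1 i j x"
      "\<lambda>(i, j). node_from 1 i j y - node_from 1 i j x"]
  obtain t0 where t0: "t0 > 0" "\<forall>z\<in>I. (case z of (i, j) \<Rightarrow> node_from 1 i j x) \<noteq> 0 \<longrightarrow>
      t0 * \<bar>case z of (i, j) \<Rightarrow> node_from 1 i j y - node_from 1 i j x\<bar>
        < \<bar>case z of (i, j) \<Rightarrow> node_from 1 i j x\<bar>"
    by blast
  define t where "t = min t0 1"
  have t: "0 < t" "t \<le> 1" "t \<le> t0" using t0 by (auto simp: t_def)
  define w where "w = x + t *\<^sub>R (y - x)"
  have w: "w \<in> sign_cell 1 l \<sigma>" using convex_sign_cell[OF \<sigma> x y] t by (simp add: w_def)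
  have node_w: "node_from 1 i' j' w = node_from 1 i' j' x + t * (node_from 1 i' j' y - node_from 1 i' j' x)"
    if "1 \<le> i'" "i' \<le> l" "j' < n i'" for i' j'
    using sign_cell_node_from_on_line[OF \<sigma> w x y, of t i' j'] that by (simp add: w_def)
  have "zero_nodes 1 l w \<subseteq> zero_nodes 1 l x - {(i, j)}"
  proof
    fix z assume "z \<in> zero_nodes 1 l w"
    then obtain i' j' where z: "z = (i', j')" "1 \<le> i'" "i' \<le> l" "j' < n i'"
      "node_from 1 i' j' w = 0"
      by (auto simp: zero_nodes_def)
    have "node_from 1 i' j' x = 0"
    proof (rule ccontr)
      assume x_ne_0: "node_from 1 i' j' x \<noteq> 0"
      then have "t0 * \<bar>node_from 1 i' j' y - node_from 1 i' j' x\<bar> < \<bar>node_from 1 i' j' x\<bar>"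
        using t0(2) z by (force simp: I_def)
      from add_mult_ne_0_if_small[OF x_ne_0 this] t show False using node_w[OF z(2-4)] z(5) by simp
    qed
    moreover have "z \<noteq> (i, j)"
      using node_w[of i j] ij t(1) z(1,5) by (auto simp: zero_nodes_def)
    ultimately show "z \<in> zero_nodes 1 l x - {(i, j)}" using z by (simp add: zero_nodes_def)
  qed
  then show ?thesis using w ij(1) by blast
qed

lemma ex_sign_cell_point_with_least_zero_nodes:
  assumes \<sigma>: "\<forall>i j. \<sigma> i j \<in> {-1, 0, 1}" and "sign_cell 1 l \<sigma> \<noteq> {}"
  obtains x where "x \<in> sign_cell 1 l \<sigma>"
    "\<And>y i j. y \<in> sign_cell 1 l \<sigma> \<Longrightarrow> (i, j) \<in> zero_nodes 1 l x \<Longrightarrow> node_from 1 i j y = 0"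
proof -
  obtain x where x: "x \<in> sign_cell 1 l \<sigma>"
    and least: "\<And>y. y \<in> sign_cell 1 l \<sigma> \<Longrightarrow> card (zero_nodes 1 l x) \<le> card (zero_nodes 1 l y)"
    using ex_has_least_nat[of "\<lambda>x. x \<in> sign_cell 1 l \<sigma>" _ "\<lambda>x. card (zero_nodes 1 l x)"] assms(2)
    by blast
  have zeros: "node_from 1 i j y = 0"
    if y: "y \<in> sign_cell 1 l \<sigma>" and ij: "(i, j) \<in> zero_nodes 1 l x" for y i j
  proof (rule ccontr)
    assume "node_from 1 i j y \<noteq> 0"
    then obtain w where w: "w \<in> sign_cell 1 l \<sigma>" "zero_nodes 1 l w \<subset> zero_nodes 1 l x"
      using sign_cell_fewer_zero_nodes[OF \<sigma> x y ij] by blast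
    from psubset_card_mono[OF finite_zero_nodes w(2)] show False using least[OF w(1)] by simp
  qed
  show ?thesis using that[OF x zeros] .
qed

lemma canon_cell_eq_region_rel_interior:
  assumes C: "C \<in> canon n W b 1 l" and x: "x \<in> rel_interior C"
  shows "C = region 1 l x"
proof -
  obtain \<sigma> where \<sigma>: "\<forall>i j. \<sigma> i j \<in> {-1, 0, 1}" and C_eq: "C = sign_cell 1 l \<sigma>"
    using C unfolding canon_eq_sign_cells by blast
  have "x \<in> C" using x rel_interior_subset by blast
  then show ?thesis
    using sign_cell_eq_region[OF \<sigma>] sign_cell_node_from_eq_0_if_rel_interior[OF \<sigma>] x C_eq
    by (auto simp: zero_nodes_def)
qed

lemma rel_interior_canon_cell_nonempty:
  assumes C: "C \<in> canon n W b 1 l"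
  shows "rel_interior C \<noteq> {}"
proof -
  obtain \<sigma> where \<sigma>: "\<forall>i j. \<sigma> i j \<in> {-1, 0, 1}" and C_eq: "C = sign_cell 1 l \<sigma>" "C \<noteq> {}"
    using C unfolding canon_eq_sign_cells by blast
  obtain x where "x \<in> C" "C = region 1 l x"
    using ex_sign_cell_point_with_least_zero_nodes[OF \<sigma>] sign_cell_eq_region[OF \<sigma>] C_eq by metis
  moreover have "x \<in> Rn (n 0)" using \<open>x \<in> C\<close> C_eq(1) by (simp add: sign_cell_def)
  ultimately show ?thesis using rel_interior_region[of x 1 l] by auto
qed

end

theorem lemma16:
  fixes m :: nat and n :: "nat \<Rightarrow> nat" and W :: "nat \<Rightarrow> nat \<Rightarrow> nat \<Rightarrow> real"
    and b :: "nat \<Rightarrow> nat \<Rightarrow> real" and C :: "vec set" and k :: nat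
  assumes "n (Suc m) = 1"
    and "\<forall>i \<le> m. 0 < n i"
    and "generic n W b m"
    and "supertransversal n W b m"
    and "C \<in> canon n W b 1 (Suc m)"
    and "adim C = k"
  shows "card {(i, j). i \<in> {1..Suc m} \<and> j < n i \<and> sign_seq n W b C i j = 0} = n 0 - k"
proof -
  interpret relu_net n W b .
  define x where "x = (SOME x. x \<in> rel_interior C)"
  have x: "x \<in> rel_interior C"
    using rel_interior_canon_cell_nonempty[OF assms(5)] unfolding x_def by (simp add: some_in_eq)
  have C: "C = region 1 (Suc m) x" by (rule canon_cell_eq_region_rel_interior[OF assms(5) x])
  have x_Rn: "x \<in> Rn (n 0)" using x rel_interior_subset C by (auto simp: region_def)
  have "adim C = dim (tangent 1 (Suc m) x)" using adim_region x_Rn C by simp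
  moreover have "independent_family (zero_nodes 1 (Suc m) x) (grad_at 1 x)"
    using zero_node_grads_independent[OF assms(3,4), of 1 x] x_Rn by simp
  then have "dim (tangent 1 (Suc m) x) + card (zero_nodes 1 (Suc m) x) = n (1 - 1)"
    unfolding tangent_def
    by (rule dim_orthogonal_complement_family[OF finite_zero_nodes]) (use grad_at_Rn in blast)
  moreover have "{(i, j). i \<in> {1..Suc m} \<and> j < n i \<and> sign_seq n W b C i j = 0}
      = zero_nodes 1 (Suc m) x"
    by (auto simp: sign_seq_def x_def[symmetric] zero_nodes_def node_eq_node_from sgn_eq_0_iff)
  ultimately show ?thesis using assms(6) by simp
qed

end
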